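(* Let $X$ be a weak complicial set, $x\in X_0$ a vertex and $n\ge1$. Define a multiplication on $\tau_n(X,x)$ by $[\alpha][\beta]=[d_n\theta]$, where $\theta:\Delta^n[n+1]\to X$ is any stratified map with $d_{n-1}\theta=\alpha$, $d_{n+1}\theta=\beta$ and $d_i\theta$ constant at $x$ for $i\notin\{n-1,n,n+1\}$ (such $\theta$ exists by lifting along $\Lambda^n[n+1]\hookrightarrow\Delta^n[n+1]$, and the class $[d_n\theta]$ depends only on $[\alpha],[\beta]$). Then this multiplication makes $\tau_n(X,x)$ a monoid, whose unit is the class of the constant $n$-simplex at $x$.
   Context: A stratified simplicial set is a pair $(X,tX)$ where $X$ is a simplicial set and $tX$ is a set of simplices of $X$ (thin simplices) containing all degenerate simplices and no $0$-simplices; stratified maps are simplicial maps preserving thin simplices. A regular stratified subset $(X,tX)\subset(Y,tY)$ means $X\subset Y$, $tX=X\cap tY$. For $n\ge1$, $\Delta[n]_t$ is $\Delta[n]$ with thin simplices the degenerate ones and $\mathrm{Id}_{[n]}$. For $k\in[n]$, $\Delta^k[n]$ is $\Delta[n]$ with thin simplices the degenerate ones and all $\alpha:[m]\to[n]$ with $\{k-1,k,k+1\}\cap[n]\subset\mathrm{Im}(\alpha)$; $\Lambda^k[n]$ is the regular stratified subset of $\Delta^k[n]$ generated by the faces $\delta_i$, $i\neq k$; $\Delta^k[n]''$ (resp. $\Lambda^k[n]'$) is $\Delta^k[n]$ (resp. $\Lambda^k[n]$) with additionally all its $(n-1)$-simplices thin; $\Delta^k[n]'=\Delta^k[n]\cup\Lambda^k[n]'$.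 A weak complicial set is a stratified simplicial set with the right lifting property against $\Lambda^k[n]\hookrightarrow\Delta^k[n]$ ($n\ge1$, $k\in[n]$) and $\Delta^k[n]'\hookrightarrow\Delta^k[n]''$ ($n\ge2$, $k\in[n]$). The product $X\circledast Y$ has underlying simplicial set $X\times Y$, with $(x,y)$ thin iff $x$ and $y$ are thin. For stratified maps $f,g:A\to X$ and an inclusion $B\hookrightarrow A$ with $f|_B=g|_B$, $f\sim_B g$ means there is a stratified map $H:A\circledast\Delta[1]_t\to X$ with $H|_{A\times\{0\}}=f$, $H|_{A\times\{1\}}=g$ and $H|_{B\circledast\Delta[1]_t}=f|_B\circ\mathrm{proj}_B$. Here $n$-simplices of $X$ are regarded as stratified maps $\Delta[n]\to X$ where $\Delta[n]$ carries the stratification with only degenerate simplices thin. For $n\ge1$, $\tau_n(X,x)$ (the $n$-th homotopy monoid) is the set of equivalence classes under $\sim_{\partial\Delta[n]}$ of $n$-simplices $\alpha$ of $X$ whose restriction to $\partial\Delta[n]$ is constant at $x$. *)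

theory Defs
  imports "HOL-Algebra.Group"
begin

text \<open>A monotone map [m] -> [n] is represented by the list of its values
  (a sorted list of length m+1 with entries at most n).\<close>

definition mono_op :: "nat \<Rightarrow> nat \<Rightarrow> nat list \<Rightarrow> bool" where
  "mono_op m n f \<longleftrightarrow> length f = Suc m \<and> sorted f \<and> (\<forall>i\<in>set f. i \<le> n)"

definition face :: "nat \<Rightarrow> nat \<Rightarrow> nat list" where
  "face n i = [0..<i] @ [Suc i..<Suc n]"

text \<open>cells X m : the m-simplices; act X n f x : the simplicial operator f^* applied
  to an n-simplex x, for f : [m] -> [n]; thin X m : thin m-simplices.\<close>
record 'a sset =
  cells :: "nat \<Rightarrow> 'a set"
  act :: "nat \<Rightarrow> nat list \<Rightarrow> 'a \<Rightarrow> 'a"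
  thin :: "nat \<Rightarrow> 'a set"

definition degen :: "(nat \<Rightarrow> 'a set) \<Rightarrow> (nat \<Rightarrow> nat list \<Rightarrow> 'a \<Rightarrow> 'a) \<Rightarrow> nat \<Rightarrow> 'a \<Rightarrow> bool" where
  "degen C A m y \<longleftrightarrow> y \<in> C m \<and> (\<exists>k<m. \<exists>g z. mono_op m k g \<and> z \<in> C k \<and> y = A k g z)"

definition degenerate :: "('a, 'b) sset_scheme \<Rightarrow> nat \<Rightarrow> 'a \<Rightarrow> bool" where
  "degenerate X = degen (cells X) (act X)"

definition strat_sset :: "('a, 'b) sset_scheme \<Rightarrow> bool" where
  "strat_sset X \<longleftrightarrow>
     (\<forall>n m f x. x \<in> cells X n \<longrightarrow> mono_op m n f \<longrightarrow> act X n f x \<in> cells X m) \<and>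
     (\<forall>n x. x \<in> cells X n \<longrightarrow> act X n [0..<Suc n] x = x) \<and>
     (\<forall>n m k f g x. x \<in> cells X n \<longrightarrow> mono_op m n f \<longrightarrow> mono_op k m g \<longrightarrow>
        act X m g (act X n f x) = act X n (map (\<lambda>j. f ! j) g) x) \<and>
     (\<forall>m. thin X m \<subseteq> cells X m) \<and>
     (\<forall>m y. degenerate X m y \<longrightarrow> y \<in> thin X m) \<and>
     thin X 0 = {}"

definition smap :: "('a, 'c) sset_scheme \<Rightarrow> ('b, 'd) sset_scheme \<Rightarrow> ('a \<Rightarrow> 'b) \<Rightarrow> bool" where
  "smap A X F \<longleftrightarrow>
     (\<forall>m a. a \<in> cells A m \<longrightarrow> F a \<in> cells X m) \<and>
     (\<forall>m k g a. a \<in> cells A m \<longrightarrow> mono_op k m g \<longrightarrow> F (act A m g a) = act X m g (F a)) \<and>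
     (\<forall>m a. a \<in> thin A m \<longrightarrow> F a \<in> thin X m)"

definition sprod :: "('a, 'c) sset_scheme \<Rightarrow> ('b, 'd) sset_scheme \<Rightarrow> ('a \<times> 'b) sset" where
  "sprod A B = \<lparr>cells = (\<lambda>m. cells A m \<times> cells B m),
                act = (\<lambda>m g p. (act A m g (fst p), act B m g (snd p))),
                thin = (\<lambda>m. thin A m \<times> thin B m)\<rparr>"

definition Dcells :: "nat \<Rightarrow> nat \<Rightarrow> nat list set" where
  "Dcells n m = {f. mono_op m n f}"

definition Dact :: "nat \<Rightarrow> nat list \<Rightarrow> nat list \<Rightarrow> nat list" where
  "Dact m g f = map (\<lambda>j. f ! j) g"

definition Delta_with :: "nat \<Rightarrow> (nat \<Rightarrow> nat list \<Rightarrow> bool) \<Rightarrow> nat list sset" where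
  "Delta_with n T = \<lparr>cells = Dcells n, act = Dact,
     thin = (\<lambda>m. {f \<in> Dcells n m. degen (Dcells n) Dact m f \<or> T m f})\<rparr>"

definition Delta :: "nat \<Rightarrow> nat list sset" where
  "Delta n = Delta_with n (\<lambda>m f. False)"

definition Delta_t :: "nat \<Rightarrow> nat list sset" where
  "Delta_t n = Delta_with n (\<lambda>m f. f = [0..<Suc n])"

definition Dk :: "nat \<Rightarrow> nat \<Rightarrow> nat list sset" where
  "Dk k n = Delta_with n (\<lambda>m f. {i. i \<le> n \<and> (Suc i = k \<or> i = k \<or> i = Suc k)} \<subseteq> set f)"

definition Hcells :: "nat \<Rightarrow> nat \<Rightarrow> nat \<Rightarrow> nat list set" where
  "Hcells k n m = {f \<in> Dcells n m. \<exists>i\<le>n. i \<noteq> k \<and> i \<notin> set f}"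

definition Horn :: "nat \<Rightarrow> nat \<Rightarrow> nat list sset" where
  "Horn k n = \<lparr>cells = Hcells k n, act = Dact,
     thin = (\<lambda>m. Hcells k n m \<inter> thin (Dk k n) m)\<rparr>"

definition Dk'' :: "nat \<Rightarrow> nat \<Rightarrow> nat list sset" where
  "Dk'' k n = \<lparr>cells = Dcells n, act = Dact,
     thin = (\<lambda>m. thin (Dk k n) m \<union> (if m = n - 1 then Dcells n m else {}))\<rparr>"

definition Dk' :: "nat \<Rightarrow> nat \<Rightarrow> nat list sset" where
  "Dk' k n = \<lparr>cells = Dcells n, act = Dact,
     thin = (\<lambda>m. thin (Dk k n) m \<union> (if m = n - 1 then Hcells k n m else {}))\<rparr>"

definition has_rlp :: "nat list sset \<Rightarrow> nat list sset \<Rightarrow> ('a, 'b) sset_scheme \<Rightarrow> bool" where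
  "has_rlp A B X \<longleftrightarrow>
     (\<forall>F. smap A X F \<longrightarrow> (\<exists>G. smap B X G \<and> (\<forall>m a. a \<in> cells A m \<longrightarrow> G a = F a)))"

definition weak_complicial :: "('a, 'b) sset_scheme \<Rightarrow> bool" where
  "weak_complicial X \<longleftrightarrow> strat_sset X \<and>
     (\<forall>n k. 1 \<le> n \<longrightarrow> k \<le> n \<longrightarrow> has_rlp (Horn k n) (Dk k n) X) \<and>
     (\<forall>n k. 2 \<le> n \<longrightarrow> k \<le> n \<longrightarrow> has_rlp (Dk' k n) (Dk'' k n) X)"

definition const :: "('a, 'b) sset_scheme \<Rightarrow> 'a \<Rightarrow> nat \<Rightarrow> 'a" where
  "const X x m = act X 0 (replicate (Suc m) 0) x"

definition sphere :: "('a, 'b) sset_scheme \<Rightarrow> nat \<Rightarrow> 'a \<Rightarrow> 'a set" where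
  "sphere X n x = {a \<in> cells X n. \<forall>m f. mono_op m n f \<longrightarrow> set f \<noteq> {0..n} \<longrightarrow>
                       act X n f a = const X x m}"

text \<open>a \<sim>_{boundary} b: a homotopy H : Delta[n] \<circledast> Delta[1]_t -> X rel boundary.
  The n-simplex a is regarded as the stratified map f \<mapsto> f^* a on Delta[n].\<close>
definition htpy :: "('a, 'b) sset_scheme \<Rightarrow> nat \<Rightarrow> 'a \<Rightarrow> 'a \<Rightarrow> bool" where
  "htpy X n a b \<longleftrightarrow> (\<exists>H. smap (sprod (Delta n) (Delta_t 1)) X H \<and>
     (\<forall>m f. f \<in> Dcells n m \<longrightarrow> H (f, replicate (Suc m) 0) = act X n f a) \<and>
     (\<forall>m f. f \<in> Dcells n m \<longrightarrow> H (f, replicate (Suc m) 1) = act X n f b) \<and>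
     (\<forall>m f e. f \<in> Dcells n m \<longrightarrow> set f \<noteq> {0..n} \<longrightarrow> e \<in> Dcells 1 m \<longrightarrow>
        H (f, e) = act X n f a))"

definition hrel :: "('a, 'b) sset_scheme \<Rightarrow> nat \<Rightarrow> 'a \<Rightarrow> ('a \<times> 'a) set" where
  "hrel X n x = {(a, b). a \<in> sphere X n x \<and> b \<in> sphere X n x \<and>
     (\<lambda>u v. u \<in> sphere X n x \<and> v \<in> sphere X n x \<and> (htpy X n u v \<or> htpy X n v u))\<^sup>*\<^sup>* a b}"

definition tau :: "('a, 'b) sset_scheme \<Rightarrow> nat \<Rightarrow> 'a \<Rightarrow> 'a set set" where
  "tau X n x = sphere X n x // hrel X n x"

definition hclass :: "('a, 'b) sset_scheme \<Rightarrow> nat \<Rightarrow> 'a \<Rightarrow> 'a \<Rightarrow> 'a set" where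
  "hclass X n x a = hrel X n x `` {a}"

definition filler :: "('a, 'b) sset_scheme \<Rightarrow> nat \<Rightarrow> 'a \<Rightarrow> 'a \<Rightarrow> 'a \<Rightarrow> (nat list \<Rightarrow> 'a) \<Rightarrow> bool" where
  "filler X n x a b \<theta> \<longleftrightarrow> smap (Dk n (Suc n)) X \<theta> \<and>
     \<theta> (face (Suc n) (n - 1)) = a \<and> \<theta> (face (Suc n) (Suc n)) = b \<and>
     (\<forall>i\<le>Suc n. i \<notin> {n - 1, n, Suc n} \<longrightarrow> \<theta> (face (Suc n) i) = const X x n)"

definition tau_mult :: "('a, 'b) sset_scheme \<Rightarrow> nat \<Rightarrow> 'a \<Rightarrow> 'a set \<Rightarrow> 'a set \<Rightarrow> 'a set" where
  "tau_mult X n x A B = (THE C. \<exists>a\<in>A. \<exists>b\<in>B. \<exists>\<theta>. filler X n x a b \<theta> \<and>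
                              C = hclass X n x (\<theta> (face (Suc n) n)))"

definition tau_monoid :: "('a, 'b) sset_scheme \<Rightarrow> nat \<Rightarrow> 'a \<Rightarrow> 'a set monoid" where
  "tau_monoid X n x = \<lparr>carrier = tau X n x, mult = tau_mult X n x,
                       one = hclass X n x (const X x n)\<rparr>"

end

theory Submission
  imports Defs
begin

text \<open>Everything is obtained by filling inner horns. The product of two spheres \<open>\<alpha>, \<beta>\<close> is the
  missing face of a filler of \<open>\<Lambda>\<^sup>n[n + 1]\<close>. Associativity, the unit laws, uniqueness of the product
  up to thin homotopy and its invariance under thin homotopies of the factors all come from
  fillers of inner horns \<open>\<Lambda>\<^sup>n[n + 2]\<close> whose faces are fillers, degenerate simplices or thin
  homotopies; the missing face is thin by the second lifting property. Here a thin homotopy is a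
  thin \<open>(n + 1)\<close>-simplex with faces \<open>u, v\<close> at \<open>n, n + 1\<close> and constant elsewhere. It yields a
  homotopy rel boundary by collapsing the prism \<open>\<Delta>[n] \<times> \<Delta>[1]\<close> onto its last simplex; conversely
  a homotopy rel boundary restricts on the \<open>n + 1\<close> simplices of the prism to thin homotopies in
  the directions \<open>0, \<dots>, n\<close>, which further horn fillings move to direction \<open>n\<close>. So the homotopy
  relation is generated by thin homotopies, and the product is well defined on classes.\<close>

section \<open>Combinatorics of simplicial operators\<close>

lemma mono_op_comp:
  assumes "mono_op k m g" "mono_op m n f"
  shows "mono_op k n (map (\<lambda>j. f ! j) g)"
proof -
  have g: "length g = Suc k" "sorted g" "\<forall>i\<in>set g. i \<le> m" and f: "length f = Suc m" "sorted f" "\<forall>i\<in>set f. i \<le> n"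
    using assms by (auto simp: mono_op_def)
  have "sorted (map (\<lambda>j. f ! j) g)"
    unfolding sorted_iff_nth_mono
  proof (intro allI impI)
    fix i j assume ij: "i \<le> j" "j < length (map (\<lambda>j. f ! j) g)"
    then have "g ! i \<le> g ! j" using g(2) by (simp add: sorted_iff_nth_mono)
    moreover have "g ! j < length f" using g ij f(1) by (simp add: less_Suc_eq_le)
    ultimately show "map (\<lambda>j. f ! j) g ! i \<le> map (\<lambda>j. f ! j) g ! j"
      using ij f(2) by (simp add: sorted_iff_nth_mono)
  qed
  then show ?thesis using g f by (auto simp: mono_op_def less_Suc_eq_le)
qed

lemma mono_op_id: "mono_op n n [0..<Suc n]"
  by (simp add: mono_op_def del: upt_Suc)

lemma map_nth_upt: "\<forall>i\<in>set g. i \<le> n \<Longrightarrow> map (\<lambda>j. [0..<Suc n] ! j) g = g"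
  by (induct g) (auto simp: nth_upt less_Suc_eq_le simp del: upt_Suc)

lemma mono_op_replicate: "mono_op m 0 (replicate (Suc m) 0)"
  by (simp add: mono_op_def)

lemma mono_op_not_surj:
  assumes "mono_op m n f" "set f \<noteq> {0..n}"
  obtains i where "i \<le> n" "i \<notin> set f"
proof -
  have "set f \<subseteq> {0..n}" using assms(1) by (auto simp: mono_op_def)
  then show ?thesis using assms(2) that by (metis atLeastAtMost_iff subsetI subset_antisym zero_le)
qed

lemma length_face: "i \<le> n \<Longrightarrow> length (face n i) = n"
  by (simp add: face_def)

lemma nth_face: "i \<le> n \<Longrightarrow> v < n \<Longrightarrow> face n i ! v = (if v < i then v else Suc v)"
  by (auto simp: face_def nth_append)

lemma set_face: "i \<le> n \<Longrightarrow> set (face n i) = {0..n} - {i}"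
  by (auto simp: face_def)

lemma face_not_surj:
  assumes "i \<le> n"
  shows "set (face n i) \<noteq> {0..n}"
proof -
  have "i \<notin> set (face n i)" "i \<in> {0..n}" using set_face[OF assms] assms by auto
  then show ?thesis by blast
qed

lemma mono_op_face: "i \<le> Suc m \<Longrightarrow> mono_op m (Suc m) (face (Suc m) i)"
  by (auto simp: mono_op_def face_def sorted_append)

lemma face_comp_face:
  assumes "i < j" "j \<le> Suc (Suc p)"
  shows "map (\<lambda>t. face (Suc (Suc p)) j ! t) (face (Suc p) i) =
         map (\<lambda>t. face (Suc (Suc p)) i ! t) (face (Suc p) (j - 1))"
  using assms by (intro nth_equalityI) (auto simp: length_face nth_face)

lemma not_in_face_comp:
  assumes "mono_op m p g" "i \<le> Suc p"
  shows "i \<notin> set (map (\<lambda>j. face (Suc p) i ! j) g)"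
  using assms by (auto simp: nth_face mono_op_def le_imp_less_Suc)

lemma mono_op_distinct_eq_face:
  assumes "mono_op m (Suc m) f" "distinct f" "i \<le> Suc m" "i \<notin> set f"
  shows "f = face (Suc m) i"
proof (rule sorted_distinct_set_unique)
  show "sorted f" "distinct f" using assms by (auto simp: mono_op_def)
  show "sorted (face (Suc m) i)" "distinct (face (Suc m) i)" by (auto simp: face_def sorted_append)
  have "set f \<subseteq> {0..Suc m} - {i}" "card (set f) = Suc m"
    using assms by (auto simp: mono_op_def distinct_card)
  moreover have "card ({0..Suc m} - {i}) = Suc m" using assms by simp
  ultimately have "set f = {0..Suc m} - {i}" by (simp add: card_subset_eq)
  then show "set f = set (face (Suc m) i)" using set_face[OF assms(3)] by simp
qed

text \<open>An operator missing the vertex \<open>i\<close> factors through the face \<open>\<delta>\<^sub>i\<close>;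
  \<open>face_factor i g\<close> is the second factor.\<close>

definition face_factor :: "nat \<Rightarrow> nat list \<Rightarrow> nat list" where
  "face_factor i g = map (\<lambda>v. if v < i then v else v - 1) g"

lemma face_comp_face_factor:
  assumes "i \<le> Suc m" "i \<notin> set g" "\<forall>v\<in>set g. v \<le> Suc m"
  shows "map (\<lambda>j. face (Suc m) i ! j) (face_factor i g) = g"
  using assms unfolding face_factor_def by (induct g) (auto simp: nth_face)

lemma mono_op_face_factor:
  assumes "mono_op k (Suc m) g" "i \<le> Suc m" "i \<notin> set g"
  shows "mono_op k m (face_factor i g)"
proof -
  have "sorted g" using assms(1) by (simp add: mono_op_def)
  then have "sorted (face_factor i g)" unfolding face_factor_def
    by (induct g) (auto simp: sorted_append)
  moreover have "\<forall>v\<in>set (face_factor i g). v \<le> m"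
    using assms unfolding face_factor_def mono_op_def by fastforce
  ultimately show ?thesis using assms(1) by (simp add: mono_op_def face_factor_def)
qed

lemma face_factor_face: "i \<le> Suc m \<Longrightarrow> face_factor i (face (Suc m) i) = [0..<Suc m]"
  by (rule nth_equalityI) (auto simp: face_factor_def length_face nth_face nth_upt simp del: upt_Suc)

lemma face_factor_comp:
  "\<forall>j\<in>set g. j < length f \<Longrightarrow> face_factor i (map (\<lambda>j. f ! j) g) = map (\<lambda>j. face_factor i f ! j) g"
  by (auto simp: face_factor_def)

lemma distinct_face_factorD: "distinct (face_factor i f) \<Longrightarrow> distinct f"
  unfolding face_factor_def using distinct_map by blast

lemma face_factor_not_in:
  assumes "i < i'" "i \<notin> set f" "i' \<notin> set f"
  shows "i' - 1 \<notin> set (face_factor i f)" "i \<notin> set (face_factor i' f)"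
proof
  assume "i' - 1 \<in> set (face_factor i f)"
  then obtain v where "v \<in> set f" "v < i \<and> i' - 1 = v \<or> \<not> v < i \<and> i' - 1 = v - 1"
    by (auto simp: face_factor_def)
  moreover have "v \<noteq> i" "v \<noteq> i'" using \<open>v \<in> set f\<close> assms by auto
  ultimately show False using assms by arith
next
  show "i \<notin> set (face_factor i' f)"
  proof
    assume "i \<in> set (face_factor i' f)"
    then obtain v where "v \<in> set f" "v < i' \<and> i = v \<or> \<not> v < i' \<and> i = v - 1"
      by (auto simp: face_factor_def)
    moreover have "v \<noteq> i" "v \<noteq> i'" using \<open>v \<in> set f\<close> assms by auto
    ultimately show False using assms by arith
  qed
qed

lemma face_factor_face_factor:
  assumes "i < i'" "i \<notin> set f" "i' \<notin> set f"
  shows "face_factor (i' - 1) (face_factor i f) = face_factor i (face_factor i' f)"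
  using assms unfolding face_factor_def by (auto simp: map_eq_conv)

definition codegen :: "nat \<Rightarrow> nat \<Rightarrow> nat list" where
  "codegen n j = [0..<Suc j] @ [j..<Suc n]"

lemma length_codegen: "j \<le> n \<Longrightarrow> length (codegen n j) = Suc (Suc n)"
  by (simp add: codegen_def)

lemma nth_codegen: "j \<le> n \<Longrightarrow> v < Suc (Suc n) \<Longrightarrow> codegen n j ! v = (if v \<le> j then v else v - 1)"
  by (auto simp: codegen_def nth_append simp del: upt_Suc)

lemma mono_op_codegen: "j \<le> n \<Longrightarrow> mono_op (Suc n) n (codegen n j)"
  by (auto simp: mono_op_def codegen_def sorted_append simp del: upt_Suc)

lemma codegen_not_distinct: "j \<le> n \<Longrightarrow> \<not> distinct (codegen n j)"
  by (auto simp: codegen_def simp del: upt_Suc)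

lemma codegen_comp_face_id:
  assumes "j \<le> n" "l = j \<or> l = Suc j"
  shows "map (\<lambda>t. codegen n j ! t) (face (Suc n) l) = [0..<Suc n]"
  using assms by (intro nth_equalityI) (auto simp: length_face nth_face nth_codegen nth_upt simp del: upt_Suc)

lemma codegen_comp_face_not_surj:
  assumes "j \<le> n" "l \<le> Suc n" "l \<noteq> j" "l \<noteq> Suc j"
  shows "set (map (\<lambda>t. codegen n j ! t) (face (Suc n) l)) \<noteq> {0..n}"
proof -
  define e where "e = (if l < j then l else l - 1)"
  have "e \<notin> set (map (\<lambda>t. codegen n j ! t) (face (Suc n) l))"
    using assms by (auto simp: e_def in_set_conv_nth length_face nth_face nth_codegen split: if_splits)
  moreover have "e \<le> n" using assms unfolding e_def by auto
  ultimately show ?thesis by auto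
qed

text \<open>A non-injective monotone operator repeats a value at two consecutive positions.\<close>

lemma mono_op_not_distinct_factor:
  assumes "mono_op m N g" "\<not> distinct g"
  obtains m' t where "m = Suc m'" "t \<le> m'"
    "map (\<lambda>j. map (\<lambda>i. g ! i) (face m (Suc t)) ! j) (codegen m' t) = g"
proof -
  have g: "length g = Suc m" "sorted g" using assms(1) by (auto simp: mono_op_def)
  have "\<not> sorted_wrt (<) g" using assms(2) by (simp add: strict_sorted_iff)
  then obtain t where t: "Suc t < length g" "\<not> g ! t < g ! Suc t"
    by (auto simp: sorted_wrt_iff_nth_Suc_transp)
  moreover have "g ! t \<le> g ! Suc t" using g(2) t(1) by (simp add: sorted_iff_nth_Suc)
  ultimately have eq: "g ! t = g ! Suc t" by simp
  obtain m' where m': "m = Suc m'" using t g(1) by (cases m) auto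
  have "map (\<lambda>j. map (\<lambda>i. g ! i) (face m (Suc t)) ! j) (codegen m' t) = g"
  proof (rule nth_equalityI)
    fix i assume "i < length (map (\<lambda>j. map (\<lambda>i. g ! i) (face m (Suc t)) ! j) (codegen m' t))"
    then show "map (\<lambda>j. map (\<lambda>i. g ! i) (face m (Suc t)) ! j) (codegen m' t) ! i = g ! i"
      using t g(1) eq m' by (cases "i \<le> t"; cases "i = Suc t")
        (auto simp: length_face nth_face nth_codegen length_codegen)
  qed (use t g(1) m' in \<open>simp add: length_codegen\<close>)
  then show ?thesis using that[of m' t] m' t(1) g(1) by (simp add: less_Suc_eq_le)
qed

lemma degen_not_distinct:
  assumes "degen (Dcells N) Dact m f"
  shows "\<not> distinct f"
proof
  assume d: "distinct f"
  from assms obtain k g z where k: "k < m" "mono_op m k g" "f = Dact k g z"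
    unfolding degen_def by blast
  have "set g \<subseteq> {0..k}" using k(2) by (auto simp: mono_op_def)
  then have "card (set g) \<le> Suc k" using card_mono[of "{0..k}" "set g"] by simp
  moreover have "length g = Suc m" using k(2) by (simp add: mono_op_def)
  moreover have "distinct g" using d k(3) by (simp add: Dact_def distinct_map)
  ultimately show False using k(1) distinct_card[of g] by simp
qed

lemma mono_op_degen:
  assumes "mono_op m k e" "k < m"
  shows "degen (Dcells k) Dact m e"
  unfolding degen_def using assms mono_op_id[of k]
  by (intro conjI exI[of _ k] exI[of _ e] exI[of _ "[0..<Suc k]"])
    (auto simp: Dcells_def Dact_def map_nth_upt mono_op_def simp del: upt_Suc)

text \<open>A simplex \<open>(f, e)\<close> of \<open>\<Delta>[n] \<times> \<Delta>[1]\<close> satisfying \<open>in_last_prism n f e\<close> lies in the last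
  simplex of the standard triangulation, spanned by \<open>(0,0), \<dots>, (n,0), (n,1)\<close>; \<open>prism_op f e\<close>
  is the corresponding simplex of \<open>\<Delta>[n + 1]\<close>.\<close>

definition prism_op :: "nat list \<Rightarrow> nat list \<Rightarrow> nat list" where
  "prism_op f e = map (\<lambda>t. f ! t + e ! t) [0..<length f]"

definition in_last_prism :: "nat \<Rightarrow> nat list \<Rightarrow> nat list \<Rightarrow> bool" where
  "in_last_prism n f e \<longleftrightarrow> (\<forall>t < length f. e ! t = 1 \<longrightarrow> f ! t = n)"

lemma length_prism_op [simp]: "length (prism_op f e) = length f"
  by (simp add: prism_op_def)

lemma nth_prism_op: "t < length f \<Longrightarrow> prism_op f e ! t = f ! t + e ! t"
  by (simp add: prism_op_def)

lemma mono_op_one_nth: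
  assumes "mono_op m 1 e" "t < length e"
  shows "e ! t = 0 \<or> e ! t = 1"
proof -
  have "e ! t \<le> 1" using assms nth_mem[OF assms(2)] unfolding mono_op_def by blast
  then show ?thesis by arith
qed

lemma mono_op_prism_op:
  assumes f: "mono_op m n f" and e: "mono_op m 1 e"
  shows "mono_op m (Suc n) (prism_op f e)"
proof -
  have fl: "length f = Suc m" "sorted f" "\<forall>i\<in>set f. i \<le> n" and el: "length e = Suc m" "sorted e"
    using f e by (auto simp: mono_op_def)
  have "sorted (prism_op f e)" unfolding sorted_iff_nth_mono
  proof (intro allI impI)
    fix i j assume "i \<le> j" "j < length (prism_op f e)"
    moreover have "f ! i \<le> f ! j" "e ! i \<le> e ! j" using fl el calculation by (simp_all add: sorted_iff_nth_mono)
    ultimately show "prism_op f e ! i \<le> prism_op f e ! j" by (simp add: nth_prism_op)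
  qed
  moreover have "v \<le> Suc n" if v: "v \<in> set (prism_op f e)" for v
  proof -
    obtain t where "t < length f" "v = prism_op f e ! t" using v by (auto simp: in_set_conv_nth)
    then have t: "t < length f" "v = f ! t + e ! t" by (simp_all add: nth_prism_op)
    then show ?thesis using fl(3) nth_mem[OF t(1)] mono_op_one_nth[OF e, of t] fl(1) el(1) by fastforce
  qed
  ultimately show ?thesis using fl by (simp add: mono_op_def)
qed

lemma prism_op_comp:
  assumes "\<forall>j\<in>set g. j < length f" "length e = length f"
  shows "prism_op (map (\<lambda>j. f ! j) g) (map (\<lambda>j. e ! j) g) = map (\<lambda>j. prism_op f e ! j) g"
  using assms by (intro nth_equalityI) (auto simp: nth_prism_op)

lemma in_last_prism_comp:
  "in_last_prism n f e \<Longrightarrow> \<forall>j\<in>set g. j < length f \<Longrightarrow> in_last_prism n (map (\<lambda>j. f ! j) g) (map (\<lambda>j. e ! j) g)"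
  unfolding in_last_prism_def by auto

text \<open>A face of a simplex outside the last one that does lie in the last simplex misses the
  vertex \<open>(n, 0)\<close>.\<close>

lemma prism_op_comp_not_in:
  assumes f: "mono_op m n f" and e: "mono_op m 1 e" and nc: "\<not> in_last_prism n f e"
    and g: "\<forall>j\<in>set g. j < length f"
    and c: "in_last_prism n (map (\<lambda>j. f ! j) g) (map (\<lambda>j. e ! j) g)"
  shows "n \<notin> set (prism_op (map (\<lambda>j. f ! j) g) (map (\<lambda>j. e ! j) g))"
proof
  have fl: "length f = Suc m" "sorted f" "\<forall>i\<in>set f. i \<le> n" and el: "length e = Suc m" "sorted e"
    using f e by (auto simp: mono_op_def)
  obtain t0 where t0: "t0 < length f" "e ! t0 = 1" "f ! t0 \<noteq> n" using nc unfolding in_last_prism_def by blast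
  then have ft0: "f ! t0 < n" using fl nth_mem[OF t0(1)] by fastforce
  assume "n \<in> set (prism_op (map (\<lambda>j. f ! j) g) (map (\<lambda>j. e ! j) g))"
  then obtain t where t: "t < length g" "f ! (g ! t) + e ! (g ! t) = n"
    by (auto simp: in_set_conv_nth nth_prism_op)
  define s where "s = g ! t"
  have s: "s < length f" using g t s_def by simp
  have "e ! s = 0 \<or> e ! s = 1" using mono_op_one_nth[OF e, of s] s fl(1) el(1) by simp
  then show False
  proof
    assume es: "e ! s = 0"
    then have "s < t0" using el fl s t0 by (metis leI sorted_iff_nth_mono zero_neq_one le_zero_eq)
    then have "f ! s \<le> f ! t0" using fl t0 by (simp add: sorted_iff_nth_mono)
    then show False using t es ft0 s_def by simp
  next
    assume es: "e ! s = 1"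
    then have "f ! s = n" using c t unfolding in_last_prism_def s_def by auto
    then show False using t es s_def by simp
  qed
qed

lemma face_factor_prism_op:
  assumes f: "mono_op m n f" and e: "mono_op m 1 e" and c: "in_last_prism n f e"
    and nn: "n \<notin> set (prism_op f e)"
  shows "face_factor n (prism_op f e) = f"
proof (rule nth_equalityI)
  have fl: "length f = Suc m" "\<forall>i\<in>set f. i \<le> n" and el: "length e = Suc m"
    using f e by (auto simp: mono_op_def)
  show "length (face_factor n (prism_op f e)) = length f" by (simp add: face_factor_def)
  fix t assume "t < length (face_factor n (prism_op f e))"
  then have t: "t < length f" by (simp add: face_factor_def)
  have "prism_op f e ! t \<noteq> n" using nn t by (metis length_prism_op nth_mem)
  moreover have "e ! t = 0 \<or> e ! t = 1" using mono_op_one_nth[OF e] t fl el by simp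
  moreover have "f ! t \<le> n" using fl nth_mem[OF t] by blast
  ultimately show "face_factor n (prism_op f e) ! t = f ! t"
    using c t unfolding in_last_prism_def face_factor_def by (auto simp: nth_prism_op)
qed

lemma prism_op_covers_last:
  assumes e: "mono_op m 1 e" and c: "in_last_prism n f e" and l: "length e = length f"
    and nd: "\<not> distinct f" and d: "distinct (prism_op f e)"
  shows "{n, Suc n} \<subseteq> set (prism_op f e)"
proof -
  obtain i j where ij: "i < length f" "j < length f" "i \<noteq> j" "f ! i = f ! j"
    using nd by (auto simp: distinct_conv_nth)
  moreover have "prism_op f e ! i \<noteq> prism_op f e ! j" using d ij by (simp add: nth_eq_iff_index_eq)
  ultimately have "e ! i \<noteq> e ! j" by (simp add: nth_prism_op)
  moreover have "e ! i = 0 \<or> e ! i = 1" "e ! j = 0 \<or> e ! j = 1" using mono_op_one_nth[OF e] ij l by auto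
  ultimately have "f ! i = n" "{prism_op f e ! i, prism_op f e ! j} = {n, Suc n}"
    using c ij unfolding in_last_prism_def by (auto simp: nth_prism_op)
  then show ?thesis using ij by (metis length_prism_op nth_mem empty_subsetI insert_subset)
qed

lemma sprod_Delta_cells:
  "(f, e) \<in> cells (sprod (Delta n) (Delta_t k)) m \<longleftrightarrow> mono_op m n f \<and> mono_op m k e"
  by (simp add: sprod_def Delta_def Delta_t_def Delta_with_def Dcells_def)

lemma sprod_Delta_act:
  "act (sprod (Delta n) (Delta_t k)) m g (f, e) = (map (\<lambda>j. f ! j) g, map (\<lambda>j. e ! j) g)"
  by (simp add: sprod_def Delta_def Delta_t_def Delta_with_def Dact_def)

text \<open>The operators \<open>(codegen n j, cut_op (n + 1) (j + 1))\<close>, \<open>j \<le> n\<close>, are the \<open>n + 1\<close> nondegenerate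
  \<open>(n + 1)\<close>-simplices of the prism \<open>\<Delta>[n] \<times> \<Delta>[1]\<close>.\<close>

definition cut_op :: "nat \<Rightarrow> nat \<Rightarrow> nat list" where
  "cut_op N j = replicate j 0 @ replicate (Suc N - j) 1"

lemma mono_op_cut_op: "j \<le> Suc N \<Longrightarrow> mono_op N 1 (cut_op N j)"
  by (auto simp: mono_op_def cut_op_def sorted_append)

lemma length_cut_op: "j \<le> Suc N \<Longrightarrow> length (cut_op N j) = Suc N"
  by (simp add: cut_op_def)

lemma nth_cut_op: "j \<le> Suc N \<Longrightarrow> v < Suc N \<Longrightarrow> cut_op N j ! v = (if v < j then 0 else 1)"
  by (simp add: cut_op_def nth_append del: replicate_Suc)

lemma cut_op_comp_face:
  assumes "j \<le> n" "l \<le> Suc n"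
  shows "map (\<lambda>t. cut_op (Suc n) (Suc j) ! t) (face (Suc n) l) = cut_op n (if l \<le> j then j else Suc j)"
  using assms by (intro nth_equalityI)
    (auto simp: length_face nth_face length_cut_op nth_cut_op simp del: replicate_Suc)

section \<open>Stratified simplicial sets\<close>

lemma smap_cong:
  assumes "smap A X G" and "\<And>m a. a \<in> cells A m \<Longrightarrow> G a = G' a"
    and "\<And>m. thin A m \<subseteq> cells A m"
    and "\<And>m k g a. a \<in> cells A m \<Longrightarrow> mono_op k m g \<Longrightarrow> act A m g a \<in> cells A k"
  shows "smap A X G'"
  using assms unfolding smap_def by (smt (verit, best) subsetD)

lemma smap_sprod_Delta_act:
  assumes "smap (sprod (Delta n) (Delta_t k)) X H" "mono_op m n f" "mono_op m k e" "mono_op m' m g"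
  shows "H (map (\<lambda>j. f ! j) g, map (\<lambda>j. e ! j) g) = act X m g (H (f, e))"
  using assms sprod_Delta_cells[of f e n k m] sprod_Delta_act[of n k m g f e] unfolding smap_def by metis

locale stratified_set =
  fixes X :: "('a, 'b) sset_scheme"
  assumes strat_sset: "strat_sset X"
begin

lemma act_cells: "z \<in> cells X N \<Longrightarrow> mono_op m N f \<Longrightarrow> act X N f z \<in> cells X m"
  using strat_sset by (simp add: strat_sset_def)

lemma act_id: "z \<in> cells X N \<Longrightarrow> act X N [0..<Suc N] z = z"
  using strat_sset unfolding strat_sset_def by blast

lemma act_comp:
  "z \<in> cells X N \<Longrightarrow> mono_op m N f \<Longrightarrow> mono_op k m g \<Longrightarrow>
   act X m g (act X N f z) = act X N (map (\<lambda>j. f ! j) g) z"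
  using strat_sset unfolding strat_sset_def by blast

lemma degenerate_thin: "degenerate X m y \<Longrightarrow> y \<in> thin X m"
  using strat_sset unfolding strat_sset_def by blast

lemma act_thin_if_not_distinct:
  assumes z: "z \<in> cells X N" and g: "mono_op m N g" "\<not> distinct g"
  shows "act X N g z \<in> thin X m"
proof -
  obtain m' t where m: "m = Suc m'" "t \<le> m'"
    and fac: "map (\<lambda>j. map (\<lambda>i. g ! i) (face m (Suc t)) ! j) (codegen m' t) = g"
    using mono_op_not_distinct_factor[OF g] .
  define h where "h = map (\<lambda>i. g ! i) (face m (Suc t))"
  have "mono_op m' m (face m (Suc t))" using mono_op_face[of "Suc t" m'] m by simp
  then have h: "mono_op m' N h" unfolding h_def using mono_op_comp g(1) by blast
  have "act X N g z = act X m' (codegen m' t) (act X N h z)"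
    using act_comp[OF z h mono_op_codegen[OF m(2)]] fac unfolding h_def by simp
  then have "degenerate X m (act X N g z)"
    unfolding degenerate_def degen_def
    using act_cells[OF z g(1)] act_cells[OF z h] mono_op_codegen[OF m(2)] m(1) by blast
  then show ?thesis by (rule degenerate_thin)
qed

lemma act_face_factor:
  assumes z: "z \<in> cells X (Suc M)" and g: "mono_op m (Suc M) g" and i: "i \<le> Suc M" "i \<notin> set g"
  shows "act X (Suc M) g z = act X M (face_factor i g) (act X (Suc M) (face (Suc M) i) z)"
  using act_comp[OF z mono_op_face[OF i(1)] mono_op_face_factor[OF g i]]
    face_comp_face_factor[OF i] g by (simp add: mono_op_def)

lemma face_face:
  assumes z: "z \<in> cells X (Suc (Suc p))" and ij: "i < j" "j \<le> Suc (Suc p)"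
  shows "act X (Suc p) (face (Suc p) i) (act X (Suc (Suc p)) (face (Suc (Suc p)) j) z) =
         act X (Suc p) (face (Suc p) (j - 1)) (act X (Suc (Suc p)) (face (Suc (Suc p)) i) z)"
  using act_comp[OF z mono_op_face[OF ij(2)] mono_op_face[of i p]]
    act_comp[OF z mono_op_face[of i] mono_op_face[of "j - 1" p]] ij face_comp_face[OF ij] by simp

lemma smap_Delta_with_act:
  assumes z: "z \<in> cells X N"
    and th: "\<And>m f. mono_op m N f \<Longrightarrow> distinct f \<Longrightarrow> T m f \<Longrightarrow> act X N f z \<in> thin X m"
  shows "smap (Delta_with N T) X (\<lambda>f. act X N f z)"
  unfolding smap_def Delta_with_def
proof (simp, intro conjI allI impI)
  fix m a assume "a \<in> Dcells N m"
  then show "act X N a z \<in> cells X m" using act_cells[OF z] by (simp add: Dcells_def)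
next
  fix m k g a assume "a \<in> Dcells N m" "mono_op k m g"
  then show "act X N (Dact m g a) z = act X m g (act X N a z)"
    using act_comp[OF z] by (simp add: Dcells_def Dact_def)
next
  fix m a assume a: "a \<in> Dcells N m \<and> (degen (Dcells N) Dact m a \<or> T m a)"
  then have am: "mono_op m N a" by (simp add: Dcells_def)
  show "act X N a z \<in> thin X m"
  proof (cases "distinct a")
    case True
    then show ?thesis using a th[OF am True] degen_not_distinct by blast
  next
    case False then show ?thesis using act_thin_if_not_distinct[OF z am] by simp
  qed
qed

lemma smap_Delta_with_eq_act:
  assumes G: "smap (Delta_with N T) X G" and f: "mono_op m N f"
  shows "G f = act X N f (G [0..<Suc N])"
proof -
  have "[0..<Suc N] \<in> cells (Delta_with N T) N"
    by (simp add: Delta_with_def Dcells_def mono_op_id del: upt_Suc)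
  moreover have "act (Delta_with N T) N f [0..<Suc N] = f"
    using f by (simp add: Delta_with_def Dact_def map_nth_upt mono_op_def del: upt_Suc)
  ultimately show ?thesis using G f unfolding smap_def by (metis sset.select_convs(2) Delta_with_def)
qed

lemma smap_Delta_with_top_cells:
  assumes "smap (Delta_with N T) X G"
  shows "G [0..<Suc N] \<in> cells X N"
  using assms mono_op_id unfolding smap_def
  by (auto simp: Delta_with_def Dcells_def simp del: upt_Suc)

end

locale pointed_stratified_set = stratified_set +
  fixes x :: 'a
  assumes base_point: "x \<in> cells X 0"
begin

lemma const_cells: "const X x m \<in> cells X m"
  unfolding const_def by (rule act_cells[OF base_point mono_op_replicate])

lemma act_const:
  assumes g: "mono_op m' m g"
  shows "act X m g (const X x m) = const X x m'"
proof -
  have "map (\<lambda>j. replicate (Suc m) (0::nat) ! j) g = map (\<lambda>_. 0) g"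
    using g by (intro map_cong) (auto simp: mono_op_def le_imp_less_Suc simp del: replicate_Suc)
  also have "\<dots> = replicate (Suc m') 0" using g by (simp add: map_replicate_const mono_op_def)
  finally show ?thesis
    unfolding const_def using act_comp[OF base_point mono_op_replicate g] by (simp del: replicate_Suc)
qed

lemma const_face: "l \<le> Suc m \<Longrightarrow> act X (Suc m) (face (Suc m) l) (const X x (Suc m)) = const X x m"
  using act_const mono_op_face by blast

lemma const_thin:
  assumes "1 \<le> m"
  shows "const X x m \<in> thin X m"
proof -
  have "degenerate X m (const X x m)"
    unfolding degenerate_def degen_def const_def
    using act_cells[OF base_point mono_op_replicate] assms mono_op_replicate[of m] base_point
    by (intro conjI exI[of _ 0]) auto
  then show ?thesis by (rule degenerate_thin)
qed

lemma act_const_if_face_const: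
  assumes z: "z \<in> cells X (Suc M)" and g: "mono_op m (Suc M) g" and i: "i \<le> Suc M" "i \<notin> set g"
    and c: "act X (Suc M) (face (Suc M) i) z = const X x M"
  shows "act X (Suc M) g z = const X x m"
  using act_face_factor[OF z g i] c act_const[OF mono_op_face_factor[OF g i]] by simp

text \<open>A non-surjective operator misses a vertex outside \<open>I\<close>, so it is constant, of positive
  dimension since it hits \<open>I\<close>; the only surjective injective operator is the identity.\<close>

lemma act_thin_if_covers:
  assumes y: "y \<in> cells X (Suc M)" "y \<in> thin X (Suc M)"
    and I: "I \<subseteq> {0..Suc M}" "card I \<ge> 2"
    and c: "\<And>i. i \<le> Suc M \<Longrightarrow> i \<notin> I \<Longrightarrow> act X (Suc M) (face (Suc M) i) y = const X x M"
    and g: "mono_op m (Suc M) g" "I \<subseteq> set g"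
  shows "act X (Suc M) g y \<in> thin X m"
proof (cases "distinct g")
  case False then show ?thesis using act_thin_if_not_distinct[OF y(1) g(1)] by simp
next
  case True
  show ?thesis
  proof (cases "set g = {0..Suc M}")
    case True
    have "g = [0..<Suc (Suc M)]"
    proof (rule sorted_distinct_set_unique)
      show "sorted g" "distinct g" using g \<open>distinct g\<close> by (auto simp: mono_op_def)
      show "set g = set [0..<Suc (Suc M)]" using True by (simp add: atLeastLessThanSuc_atLeastAtMost del: upt_Suc)
    qed (simp_all del: upt_Suc)
    moreover have "m = Suc M" using g(1) \<open>g = [0..<Suc (Suc M)]\<close> by (simp add: mono_op_def del: upt_Suc)
    ultimately show ?thesis using act_id[OF y(1)] y(2) by (simp del: upt_Suc)
  next
    case False
    then obtain i where i: "i \<le> Suc M" "i \<notin> set g" using mono_op_not_surj[OF g(1)] by blast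
    then have "i \<notin> I" using g by auto
    have "card I \<le> length g" using g(2) card_mono[of "set g" I] card_length[of g] by simp
    then have "1 \<le> m" using I g by (simp add: mono_op_def)
    then show ?thesis using act_const_if_face_const[OF y(1) g(1) i c[OF i(1) \<open>i \<notin> I\<close>]] const_thin by simp
  qed
qed

end

section \<open>Horn filling\<close>

context stratified_set
begin

text \<open>The faces \<open>y i\<close>, \<open>i \<noteq> k\<close>, of a stratified map \<open>\<Lambda>\<^sup>k[p + 2] \<rightarrow> X\<close>.\<close>

definition stratified_horn :: "nat \<Rightarrow> nat \<Rightarrow> (nat \<Rightarrow> 'a) \<Rightarrow> bool" where
  "stratified_horn k p y \<longleftrightarrow>
     (\<forall>i\<le>Suc (Suc p). i \<noteq> k \<longrightarrow> y i \<in> cells X (Suc p)) \<and>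
     (\<forall>i i'. i < i' \<longrightarrow> i' \<le> Suc (Suc p) \<longrightarrow> i \<noteq> k \<longrightarrow> i' \<noteq> k \<longrightarrow>
        act X (Suc p) (face (Suc p) i) (y i') = act X (Suc p) (face (Suc p) (i' - 1)) (y i)) \<and>
     (\<forall>i m g. i \<le> Suc (Suc p) \<longrightarrow> i \<noteq> k \<longrightarrow> mono_op m (Suc p) g \<longrightarrow>
        {k - 1, k, Suc k} \<subseteq> set (map (\<lambda>j. face (Suc (Suc p)) i ! j) g) \<longrightarrow>
        act X (Suc p) g (y i) \<in> thin X m)"

lemma stratified_hornI:
  assumes "\<And>i. i \<le> Suc (Suc p) \<Longrightarrow> i \<noteq> k \<Longrightarrow> y i \<in> cells X (Suc p)"
    and "\<And>i i'. i < i' \<Longrightarrow> i' \<le> Suc (Suc p) \<Longrightarrow> i \<noteq> k \<Longrightarrow> i' \<noteq> k \<Longrightarrow>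
      act X (Suc p) (face (Suc p) i) (y i') = act X (Suc p) (face (Suc p) (i' - 1)) (y i)"
    and "\<And>i m g. i \<le> Suc (Suc p) \<Longrightarrow> i \<noteq> k \<Longrightarrow> mono_op m (Suc p) g \<Longrightarrow>
      {k - 1, k, Suc k} \<subseteq> set (map (\<lambda>j. face (Suc (Suc p)) i ! j) g) \<Longrightarrow>
      act X (Suc p) g (y i) \<in> thin X m"
  shows "stratified_horn k p y"
  using assms unfolding stratified_horn_def by blast

lemma stratified_hornD:
  assumes "stratified_horn k p y"
  shows "i \<le> Suc (Suc p) \<Longrightarrow> i \<noteq> k \<Longrightarrow> y i \<in> cells X (Suc p)"
    and "i < i' \<Longrightarrow> i' \<le> Suc (Suc p) \<Longrightarrow> i \<noteq> k \<Longrightarrow> i' \<noteq> k \<Longrightarrow>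
      act X (Suc p) (face (Suc p) i) (y i') = act X (Suc p) (face (Suc p) (i' - 1)) (y i)"
    and "i \<le> Suc (Suc p) \<Longrightarrow> i \<noteq> k \<Longrightarrow> mono_op m (Suc p) g \<Longrightarrow>
      {k - 1, k, Suc k} \<subseteq> set (map (\<lambda>j. face (Suc (Suc p)) i ! j) g) \<Longrightarrow>
      act X (Suc p) g (y i) \<in> thin X m"
  using assms unfolding stratified_horn_def by blast+

lemma compatible_faces_act_eq:
  assumes f: "mono_op m (Suc (Suc p)) f"
    and ii: "i < i'" "i' \<le> Suc (Suc p)" "i \<notin> set f" "i' \<notin> set f"
    and yc: "y \<in> cells X (Suc p)" "y' \<in> cells X (Suc p)"
    and compat: "act X (Suc p) (face (Suc p) i) y' = act X (Suc p) (face (Suc p) (i' - 1)) y"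
  shows "act X (Suc p) (face_factor i f) y = act X (Suc p) (face_factor i' f) y'"
proof -
  have i: "i' - 1 \<le> Suc p" "i \<le> Suc p" using ii by auto
  have m1: "mono_op m (Suc p) (face_factor i f)" "mono_op m (Suc p) (face_factor i' f)"
    using mono_op_face_factor[OF f] ii by auto
  note miss = face_factor_not_in[OF ii(1,3,4)]
  have m2: "mono_op m p (face_factor i (face_factor i' f))"
    using mono_op_face_factor[OF m1(2) i(2) miss(2)] .
  have "act X (Suc p) (face_factor i f) y =
        act X p (face_factor i (face_factor i' f)) (act X (Suc p) (face (Suc p) (i' - 1)) y)"
    using act_face_factor[OF yc(1) m1(1) i(1) miss(1)] face_factor_face_factor[OF ii(1,3,4)] by simp
  also have "\<dots> = act X (Suc p) (face_factor i' f) y'"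
    using act_face_factor[OF yc(2) m1(2) i(2) miss(2)] compat by simp
  finally show ?thesis .
qed

definition horn_map :: "nat \<Rightarrow> nat \<Rightarrow> (nat \<Rightarrow> 'a) \<Rightarrow> nat list \<Rightarrow> 'a" where
  "horn_map k p y f =
     (let i = LEAST i. i \<le> Suc (Suc p) \<and> i \<noteq> k \<and> i \<notin> set f in act X (Suc p) (face_factor i f) (y i))"

lemma horn_map_eq:
  assumes y: "stratified_horn k p y" and f: "mono_op m (Suc (Suc p)) f"
    and i: "i \<le> Suc (Suc p)" "i \<noteq> k" "i \<notin> set f"
  shows "horn_map k p y f = act X (Suc p) (face_factor i f) (y i)"
proof -
  define i0 where "i0 = (LEAST i. i \<le> Suc (Suc p) \<and> i \<noteq> k \<and> i \<notin> set f)"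
  have i0: "i0 \<le> Suc (Suc p)" "i0 \<noteq> k" "i0 \<notin> set f" "i0 \<le> i"
    using LeastI[of "\<lambda>i. i \<le> Suc (Suc p) \<and> i \<noteq> k \<and> i \<notin> set f" i] Least_le[of _ i] i
    unfolding i0_def by auto
  show ?thesis
  proof (cases "i0 = i")
    case False
    then show ?thesis unfolding horn_map_def Let_def i0_def[symmetric]
      using compatible_faces_act_eq[OF f _ i(1) i0(3) i(3)] i0 i y
      unfolding stratified_horn_def by simp
  qed (simp add: horn_map_def i0_def)
qed

lemma horn_map_act:
  assumes y: "stratified_horn k p y" and a: "mono_op m (Suc (Suc p)) a"
    and i: "i \<le> Suc (Suc p)" "i \<noteq> k" "i \<notin> set a" and g: "mono_op k' m g"
  shows "horn_map k p y (map (\<lambda>j. a ! j) g) = act X m g (horn_map k p y a)"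
proof -
  have ga: "mono_op k' (Suc (Suc p)) (map (\<lambda>j. a ! j) g)" by (rule mono_op_comp[OF g a])
  have i': "i \<notin> set (map (\<lambda>j. a ! j) g)"
    using i g a unfolding mono_op_def by (auto simp: less_Suc_eq_le)
  have "face_factor i (map (\<lambda>j. a ! j) g) = map (\<lambda>j. face_factor i a ! j) g"
    using face_factor_comp[of g a i] g a unfolding mono_op_def by (auto simp: less_Suc_eq_le)
  then show ?thesis
    using horn_map_eq[OF y ga i(1,2) i'] horn_map_eq[OF y a i] i
      act_comp[OF stratified_hornD(1)[OF y i(1,2)] mono_op_face_factor[OF a _ i(3)] g] by auto
qed

lemma horn_map_thin:
  assumes y: "stratified_horn k p y" and a: "mono_op m (Suc (Suc p)) a"
    and i: "i \<le> Suc (Suc p)" "i \<noteq> k" "i \<notin> set a"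
    and th: "\<not> distinct a \<or> {k - 1, k, Suc k} \<subseteq> set a"
  shows "horn_map k p y a \<in> thin X m"
proof -
  have ai: "mono_op m (Suc p) (face_factor i a)" using mono_op_face_factor[OF a] i by auto
  have "map (\<lambda>j. face (Suc (Suc p)) i ! j) (face_factor i a) = a"
    using face_comp_face_factor[of i "Suc p" a] a i unfolding mono_op_def by auto
  then show ?thesis
    using th horn_map_eq[OF y a i] stratified_hornD(3)[OF y i(1,2) ai] distinct_face_factorD
      act_thin_if_not_distinct[OF stratified_hornD(1)[OF y i(1,2)] ai] by metis
qed

lemma smap_horn_map:
  assumes y: "stratified_horn k p y" and k: "1 \<le> k" "k \<le> Suc p"
  shows "smap (Horn k (Suc (Suc p))) X (horn_map k p y)"
  unfolding smap_def
proof (intro conjI allI impI)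
  fix m a assume "a \<in> cells (Horn k (Suc (Suc p))) m"
  then obtain i where a: "mono_op m (Suc (Suc p)) a" and i: "i \<le> Suc (Suc p)" "i \<noteq> k" "i \<notin> set a"
    by (auto simp: Horn_def Hcells_def Dcells_def)
  then show "horn_map k p y a \<in> cells X m"
    using horn_map_eq[OF y a i] act_cells stratified_hornD(1)[OF y] mono_op_face_factor[OF a] by auto
next
  fix m k' g a assume "a \<in> cells (Horn k (Suc (Suc p))) m" and g: "mono_op k' m g"
  then obtain i where a: "mono_op m (Suc (Suc p)) a" and i: "i \<le> Suc (Suc p)" "i \<noteq> k" "i \<notin> set a"
    by (auto simp: Horn_def Hcells_def Dcells_def)
  then show "horn_map k p y (act (Horn k (Suc (Suc p))) m g a) = act X m g (horn_map k p y a)"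
    using horn_map_act[OF y a i g] by (simp add: Horn_def Dact_def)
next
  fix m a assume "a \<in> thin (Horn k (Suc (Suc p))) m"
  then obtain i where a: "mono_op m (Suc (Suc p)) a" and i: "i \<le> Suc (Suc p)" "i \<noteq> k" "i \<notin> set a"
    and th: "degen (Dcells (Suc (Suc p))) Dact m a \<or>
      {i. i \<le> Suc (Suc p) \<and> (Suc i = k \<or> i = k \<or> i = Suc k)} \<subseteq> set a"
    by (auto simp: Horn_def Hcells_def Dcells_def Dk_def Delta_with_def)
  have "{i. i \<le> Suc (Suc p) \<and> (Suc i = k \<or> i = k \<or> i = Suc k)} = {k - 1, k, Suc k}"
    using k by auto
  then show "horn_map k p y a \<in> thin X m"
    using horn_map_thin[OF y a i] th degen_not_distinct by metis
qed

lemma smap_Dk'_act: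
  assumes z: "z \<in> cells X (Suc (Suc p))"
    and sm: "smap (Dk k (Suc (Suc p))) X (\<lambda>f. act X (Suc (Suc p)) f z)"
    and th: "\<And>i. i \<le> Suc (Suc p) \<Longrightarrow> i \<noteq> k \<Longrightarrow> act X (Suc (Suc p)) (face (Suc (Suc p)) i) z \<in> thin X (Suc p)"
  shows "smap (Dk' k (Suc (Suc p))) X (\<lambda>f. act X (Suc (Suc p)) f z)"
  unfolding smap_def
proof (intro conjI allI impI)
  fix m a assume "a \<in> cells (Dk' k (Suc (Suc p))) m"
  then show "act X (Suc (Suc p)) a z \<in> cells X m" using act_cells[OF z] by (simp add: Dk'_def Dcells_def)
next
  fix m k' g a assume "a \<in> cells (Dk' k (Suc (Suc p))) m" "mono_op k' m g"
  then show "act X (Suc (Suc p)) (act (Dk' k (Suc (Suc p))) m g a) z = act X m g (act X (Suc (Suc p)) a z)"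
    using act_comp[OF z] by (simp add: Dk'_def Dcells_def Dact_def)
next
  fix m a assume a: "a \<in> thin (Dk' k (Suc (Suc p))) m"
  show "act X (Suc (Suc p)) a z \<in> thin X m"
  proof (cases "a \<in> thin (Dk k (Suc (Suc p))) m")
    case False
    then obtain i where m: "m = Suc p" and am: "mono_op (Suc p) (Suc (Suc p)) a"
      and i: "i \<le> Suc (Suc p)" "i \<noteq> k" "i \<notin> set a"
      using a by (auto simp: Dk'_def Hcells_def Dcells_def split: if_splits)
    then show ?thesis
      using mono_op_distinct_eq_face[OF am _ i(1,3)] th[OF i(1,2)] act_thin_if_not_distinct[OF z am] by auto
  qed (use sm in \<open>simp add: smap_def\<close>)
qed

end

locale weak_complicial_set =
  fixes X :: "('a, 'b) sset_scheme"
  assumes weak_complicial: "weak_complicial X"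

sublocale weak_complicial_set \<subseteq> stratified_set
  using weak_complicial by unfold_locales (simp add: weak_complicial_def)

context weak_complicial_set
begin

lemma inner_horn_filler:
  assumes y: "stratified_horn k p y" and k: "1 \<le> k" "k \<le> Suc p"
  obtains z where "z \<in> cells X (Suc (Suc p))"
    "\<And>i. i \<le> Suc (Suc p) \<Longrightarrow> i \<noteq> k \<Longrightarrow> act X (Suc (Suc p)) (face (Suc (Suc p)) i) z = y i"
    "smap (Dk k (Suc (Suc p))) X (\<lambda>f. act X (Suc (Suc p)) f z)"
proof -
  define N where "N = Suc (Suc p)"
  have "has_rlp (Horn k N) (Dk k N) X" using weak_complicial k unfolding weak_complicial_def N_def by auto
  then obtain G where G: "smap (Dk k N) X G"
    and GF: "\<And>m a. a \<in> cells (Horn k N) m \<Longrightarrow> G a = horn_map k p y a"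
    using smap_horn_map[OF y k] unfolding has_rlp_def N_def by blast
  define z where "z = G [0..<Suc N]"
  have Gz: "G f = act X N f z" if "mono_op m N f" for m f
    using smap_Delta_with_eq_act[of N _ G] G that unfolding z_def Dk_def by blast
  have "smap (Dk k N) X (\<lambda>f. act X N f z)"
    by (rule smap_cong[OF G]) (auto simp: Gz Dk_def Delta_with_def Dcells_def Dact_def mono_op_comp)
  moreover have "act X N (face N i) z = y i" if i: "i \<le> N" "i \<noteq> k" for i
  proof -
    have fm: "mono_op (Suc p) N (face N i)" using mono_op_face i unfolding N_def by simp
    have "face N i \<in> cells (Horn k N) (Suc p)"
      using fm i by (auto simp: Horn_def Hcells_def Dcells_def set_face)
    then have "act X N (face N i) z = horn_map k p y (face N i)" using GF Gz[OF fm] by simp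
    also have "\<dots> = act X (Suc p) [0..<Suc (Suc p)] (y i)"
      using horn_map_eq[OF y fm[unfolded N_def]] i face_factor_face[of i "Suc p"]
      unfolding N_def by (simp add: set_face del: upt_Suc)
    also have "\<dots> = y i" using act_id y i unfolding stratified_horn_def N_def by blast
    finally show ?thesis .
  qed
  moreover have "z \<in> cells X N" using smap_Delta_with_top_cells G unfolding z_def Dk_def by blast
  ultimately show ?thesis using that unfolding N_def by blast
qed

lemma face_thin_if_other_faces_thin:
  assumes z: "z \<in> cells X (Suc (Suc p))" and k: "k \<le> Suc (Suc p)"
    and sm: "smap (Dk k (Suc (Suc p))) X (\<lambda>f. act X (Suc (Suc p)) f z)"
    and th: "\<And>i. i \<le> Suc (Suc p) \<Longrightarrow> i \<noteq> k \<Longrightarrow> act X (Suc (Suc p)) (face (Suc (Suc p)) i) z \<in> thin X (Suc p)"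
  shows "act X (Suc (Suc p)) (face (Suc (Suc p)) k) z \<in> thin X (Suc p)"
proof -
  define N where "N = Suc (Suc p)"
  have "has_rlp (Dk' k N) (Dk'' k N) X" using weak_complicial k unfolding weak_complicial_def N_def by auto
  then obtain G where G: "smap (Dk'' k N) X G" and GF: "\<And>m a. a \<in> cells (Dk' k N) m \<Longrightarrow> G a = act X N a z"
    using smap_Dk'_act[OF z sm th] unfolding has_rlp_def N_def by blast
  have fk: "mono_op (Suc p) N (face N k)" using mono_op_face k unfolding N_def by simp
  then have "G (face N k) \<in> thin X (Suc p)"
    using G unfolding smap_def by (simp add: Dk''_def Dcells_def N_def)
  moreover have "G (face N k) = act X N (face N k) z" using GF fk by (simp add: Dk'_def Dcells_def)
  ultimately show ?thesis unfolding N_def by simp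
qed

text \<open>The missing face of a filler of a thin horn is thin by the second lifting property; its
  faces are read off the simplicial identities.\<close>

lemma inner_horn_thin_composite:
  assumes y: "stratified_horn k n y" and k: "1 \<le> k" "k \<le> Suc n"
    and yt: "\<And>i. i \<le> Suc (Suc n) \<Longrightarrow> i \<noteq> k \<Longrightarrow> y i \<in> thin X (Suc n)"
  obtains t where "t \<in> cells X (Suc n)" "t \<in> thin X (Suc n)"
    "\<And>l. l \<le> Suc n \<Longrightarrow> act X (Suc n) (face (Suc n) l) t =
        (if l < k then act X (Suc n) (face (Suc n) (k - 1)) (y l)
         else act X (Suc n) (face (Suc n) k) (y (Suc l)))"
proof -
  obtain z where z: "z \<in> cells X (Suc (Suc n))"
    and zf: "\<And>i. i \<le> Suc (Suc n) \<Longrightarrow> i \<noteq> k \<Longrightarrow> act X (Suc (Suc n)) (face (Suc (Suc n)) i) z = y i"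
    and sm: "smap (Dk k (Suc (Suc n))) X (\<lambda>f. act X (Suc (Suc n)) f z)"
    using inner_horn_filler[OF y k] by blast
  define t where "t = act X (Suc (Suc n)) (face (Suc (Suc n)) k) z"
  have kk: "k \<le> Suc (Suc n)" using k by simp
  have "t \<in> cells X (Suc n)" unfolding t_def by (rule act_cells[OF z mono_op_face[OF kk]])
  moreover have "t \<in> thin X (Suc n)" unfolding t_def
    by (rule face_thin_if_other_faces_thin[OF z kk sm]) (simp add: zf yt)
  moreover have "act X (Suc n) (face (Suc n) l) t =
        (if l < k then act X (Suc n) (face (Suc n) (k - 1)) (y l)
         else act X (Suc n) (face (Suc n) k) (y (Suc l)))"
    if l: "l \<le> Suc n" for l
    using face_face[OF z, of l k] face_face[OF z, of k "Suc l"] zf l kk unfolding t_def by auto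
  ultimately show ?thesis using that by blast
qed

end

context pointed_stratified_set
begin

lemma act_const_thin_if_covers:
  assumes "1 \<le> k" "mono_op m (Suc p) g" "{k - 1, k, Suc k} \<subseteq> set (map h g)"
  shows "act X (Suc p) g (const X x (Suc p)) \<in> thin X m"
proof -
  have "card {k, Suc k} \<le> card (set (map h g))" using assms(3) by (intro card_mono) auto
  also have "\<dots> \<le> length g" using card_length[of "map h g"] by simp
  finally have "1 \<le> m" using assms(2) by (simp add: mono_op_def)
  then show ?thesis using act_const[OF assms(2)] const_thin by simp
qed

lemma act_thin_if_covers_below_face:
  assumes k: "1 \<le> k" and i: "Suc k < i" "i \<le> Suc (Suc p)"
    and y: "y \<in> cells X (Suc p)" "y \<in> thin X (Suc p)"
    and c: "\<And>l. l \<le> Suc p \<Longrightarrow> l \<notin> {k - 1, k, Suc k} \<Longrightarrow> act X (Suc p) (face (Suc p) l) y = const X x p"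
    and g: "mono_op m (Suc p) g" "{k - 1, k, Suc k} \<subseteq> set (map (\<lambda>j. face (Suc (Suc p)) i ! j) g)"
  shows "act X (Suc p) g y \<in> thin X m"
proof (rule act_thin_if_covers[OF y _ _ c g(1)])
  have "e \<in> set g" if e: "e \<in> {k - 1, k, Suc k}" for e
  proof -
    obtain v where v: "v \<in> set g" "face (Suc (Suc p)) i ! v = e" using e g(2) by auto
    moreover have "v < Suc (Suc p)" using v g(1) by (auto simp: mono_op_def)
    ultimately show ?thesis using e i nth_face[OF i(2)] by (auto split: if_splits)
  qed
  then show "{k - 1, k, Suc k} \<subseteq> set g" by blast
  show "{k - 1, k, Suc k} \<subseteq> {0..Suc p}" using i by auto
  show "2 \<le> card {k - 1, k, Suc k}" using k by (cases k) auto
qed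

end

section \<open>Homotopy monoids\<close>

locale homotopy_monoid = weak_complicial_set X + pointed_stratified_set X x
  for X :: "('a, 'b) sset_scheme" and x :: 'a +
  fixes n :: nat
  assumes dim_pos: "1 \<le> n"
begin

abbreviation sph :: "'a set" where "sph \<equiv> sphere X n x"

abbreviation dface :: "nat \<Rightarrow> 'a \<Rightarrow> 'a" where "dface l t \<equiv> act X (Suc n) (face (Suc n) l) t"

abbreviation composite :: "(nat list \<Rightarrow> 'a) \<Rightarrow> 'a" where "composite \<theta> \<equiv> \<theta> (face (Suc n) n)"

lemma n_Suc: "n = Suc (n - 1)" using dim_pos by simp

lemma mono_op_face_n: "l \<le> n \<Longrightarrow> mono_op (n - 1) n (face n l)"
  using mono_op_face[of l "n - 1"] n_Suc by simp

lemma sphere_cells: "u \<in> sph \<Longrightarrow> u \<in> cells X n"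
  by (simp add: sphere_def)

lemma sphere_act: "u \<in> sph \<Longrightarrow> mono_op m n f \<Longrightarrow> set f \<noteq> {0..n} \<Longrightarrow> act X n f u = const X x m"
  by (simp add: sphere_def)

lemma sphere_face:
  assumes "u \<in> sph" "l \<le> n"
  shows "act X n (face n l) u = const X x (n - 1)"
  using sphere_act[OF assms(1) mono_op_face_n[OF assms(2)] face_not_surj[OF assms(2)]] .

lemma sphereI:
  assumes u: "u \<in> cells X n" and f: "\<And>l. l \<le> n \<Longrightarrow> act X n (face n l) u = const X x (n - 1)"
  shows "u \<in> sph"
proof -
  have "act X n g u = const X x m" if g: "mono_op m n g" "set g \<noteq> {0..n}" for m g
  proof -
    obtain l where l: "l \<le> n" "l \<notin> set g" using mono_op_not_surj[OF g] .
    show ?thesis using act_const_if_face_const[of u "n - 1" m g l] u g l f[OF l(1)] n_Suc by simp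
  qed
  then show ?thesis using u unfolding sphere_def by blast
qed

lemma const_in_sphere: "const X x n \<in> sph"
  unfolding sphere_def using const_cells act_const by simp

definition sdegen :: "nat \<Rightarrow> 'a \<Rightarrow> 'a" where
  "sdegen j u = act X n (codegen n j) u"

lemma sdegen_cells: "u \<in> sph \<Longrightarrow> j \<le> n \<Longrightarrow> sdegen j u \<in> cells X (Suc n)"
  unfolding sdegen_def using act_cells sphere_cells mono_op_codegen by blast

lemma sdegen_thin: "u \<in> sph \<Longrightarrow> j \<le> n \<Longrightarrow> sdegen j u \<in> thin X (Suc n)"
  unfolding sdegen_def using act_thin_if_not_distinct sphere_cells mono_op_codegen codegen_not_distinct by blast

lemma sdegen_face:
  assumes u: "u \<in> sph" and j: "j \<le> n" and l: "l \<le> Suc n"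
  shows "dface l (sdegen j u) = (if l = j \<or> l = Suc j then u else const X x n)"
proof -
  have "dface l (sdegen j u) = act X n (map (\<lambda>t. codegen n j ! t) (face (Suc n) l)) u"
    unfolding sdegen_def using act_comp[OF sphere_cells[OF u] mono_op_codegen[OF j] mono_op_face[OF l]] .
  then show ?thesis
    using codegen_comp_face_id[OF j] act_id[OF sphere_cells[OF u]]
      sphere_act[OF u mono_op_comp[OF mono_op_face[OF l] mono_op_codegen[OF j]] codegen_comp_face_not_surj[OF j l]]
    by (auto simp del: upt_Suc)
qed

definition filler_simplex :: "'a \<Rightarrow> bool" where
  "filler_simplex t \<longleftrightarrow> t \<in> cells X (Suc n) \<and> t \<in> thin X (Suc n) \<and>
     (\<forall>l\<le>Suc n. l \<notin> {n - 1, n, Suc n} \<longrightarrow> dface l t = const X x n)"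

lemma filler_of_simplex:
  assumes "filler_simplex t"
  shows "filler X n x (dface (n - 1) t) (dface (Suc n) t) (\<lambda>f. act X (Suc n) f t)"
proof -
  have t: "t \<in> cells X (Suc n)" "t \<in> thin X (Suc n)"
    and c: "\<And>l. l \<le> Suc n \<Longrightarrow> l \<notin> {n - 1, n, Suc n} \<Longrightarrow> dface l t = const X x n"
    using assms unfolding filler_simplex_def by auto
  have "{i. i \<le> Suc n \<and> (Suc i = n \<or> i = n \<or> i = Suc n)} = {n - 1, n, Suc n}"
    using dim_pos by auto
  moreover have "card {n - 1, n, Suc n} \<ge> 2" using dim_pos by (cases n) auto
  ultimately have "smap (Dk n (Suc n)) X (\<lambda>f. act X (Suc n) f t)"
    unfolding Dk_def using act_thin_if_covers[OF t, of "{n - 1, n, Suc n}"] c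
    by (intro smap_Delta_with_act[OF t(1)]) auto
  then show ?thesis unfolding filler_def using c by simp
qed

lemma fillerD:
  assumes "filler X n x a b \<theta>"
  shows "filler_simplex (\<theta> [0..<Suc (Suc n)])"
    and "\<And>m f. mono_op m (Suc n) f \<Longrightarrow> \<theta> f = act X (Suc n) f (\<theta> [0..<Suc (Suc n)])"
    and "dface (n - 1) (\<theta> [0..<Suc (Suc n)]) = a"
    and "dface (Suc n) (\<theta> [0..<Suc (Suc n)]) = b"
    and "composite \<theta> = dface n (\<theta> [0..<Suc (Suc n)])"
proof -
  have sm: "smap (Dk n (Suc n)) X \<theta>" using assms by (simp add: filler_def)
  show eq: "\<And>m f. mono_op m (Suc n) f \<Longrightarrow> \<theta> f = act X (Suc n) f (\<theta> [0..<Suc (Suc n)])"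
    using smap_Delta_with_eq_act sm unfolding Dk_def by blast
  show "dface (n - 1) (\<theta> [0..<Suc (Suc n)]) = a"
    using eq[OF mono_op_face[of "n - 1" n]] assms by (simp add: filler_def)
  show "dface (Suc n) (\<theta> [0..<Suc (Suc n)]) = b"
    using eq[OF mono_op_face[of "Suc n" n]] assms by (simp add: filler_def)
  show "composite \<theta> = dface n (\<theta> [0..<Suc (Suc n)])"
    using eq[OF mono_op_face[of n n]] by simp
  have "[0..<Suc (Suc n)] \<in> thin (Dk n (Suc n)) (Suc n)"
    by (auto simp: Dk_def Delta_with_def Dcells_def mono_op_id simp del: upt_Suc)
  then show "filler_simplex (\<theta> [0..<Suc (Suc n)])"
    using sm smap_Delta_with_top_cells[of "Suc n" _ \<theta>] assms eq[OF mono_op_face]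
    unfolding filler_simplex_def filler_def smap_def Dk_def by auto
qed

lemma composite_in_sphere:
  assumes \<theta>: "filler X n x a b \<theta>" and a: "a \<in> sph" and b: "b \<in> sph"
  shows "composite \<theta> \<in> sph"
proof -
  define z where "z = \<theta> [0..<Suc (Suc n)]"
  note D = fillerD[OF \<theta>, folded z_def]
  have z: "z \<in> cells X (Suc n)" using D(1) unfolding filler_simplex_def by simp
  obtain p where p: "n = Suc p" using dim_pos by (cases n) auto
  have "act X n (face n l) (dface n z) = const X x (n - 1)" if l: "l \<le> n" for l
  proof (cases "l < n")
    case True
    then have "act X n (face n l) (dface n z) = act X n (face n (n - 1)) (dface l z)"
      using face_face[of z p l n] z p by simp
    also have "\<dots> = const X x (n - 1)"
      using D(1,3) sphere_face[OF a] const_face[of "n - 1" "n - 1"] True n_Suc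
      unfolding filler_simplex_def by (cases "l = n - 1") auto
    finally show ?thesis .
  next
    case False
    then have "act X n (face n l) (dface n z) = act X n (face n n) (dface (Suc n) z)"
      using face_face[of z p n "Suc n"] z p l by simp
    then show ?thesis using D(4) sphere_face[OF b] by simp
  qed
  then show ?thesis using sphereI act_cells[OF z mono_op_face] D(5) by simp
qed

lemma filler_exists:
  assumes a: "a \<in> sph" and b: "b \<in> sph"
  obtains \<theta> where "filler X n x a b \<theta>"
proof -
  obtain p where p: "n = Suc p" using dim_pos by (cases n) auto
  define y where "y i = (if i = p then a else if i = Suc (Suc p) then b else const X x (Suc p))" for i
  have yf: "act X (Suc p) (face (Suc p) l) (y i) = const X x p" if "l \<le> Suc p" for i l
    unfolding y_def using sphere_face[OF a, of l] sphere_face[OF b, of l] const_face[of l p] that p by auto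
  have "stratified_horn (Suc p) p y"
  proof (rule stratified_hornI)
    show "y i \<in> cells X (Suc p)" for i
      unfolding y_def using sphere_cells[OF a] sphere_cells[OF b] const_cells p by auto
    show "act X (Suc p) (face (Suc p) i) (y i') = act X (Suc p) (face (Suc p) (i' - 1)) (y i)"
      if "i < i'" "i' \<le> Suc (Suc p)" for i i'
      using yf[of i i'] yf[of "i' - 1" i] that by simp
    show "act X (Suc p) g (y i) \<in> thin X m"
      if i: "i \<le> Suc (Suc p)" and g: "mono_op m (Suc p) g"
        and cov: "{Suc p - 1, Suc p, Suc (Suc p)} \<subseteq> set (map (\<lambda>j. face (Suc (Suc p)) i ! j) g)" for i m g
    proof -
      have "i \<noteq> p" "i \<noteq> Suc (Suc p)" using not_in_face_comp[OF g i] cov by auto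
      then show ?thesis using act_const_thin_if_covers[of "Suc p" m p g] g cov unfolding y_def by simp
    qed
  qed
  then obtain z where "z \<in> cells X (Suc (Suc p))"
    "\<And>i. i \<le> Suc (Suc p) \<Longrightarrow> i \<noteq> Suc p \<Longrightarrow> act X (Suc (Suc p)) (face (Suc (Suc p)) i) z = y i"
    "smap (Dk (Suc p) (Suc (Suc p))) X (\<lambda>f. act X (Suc (Suc p)) f z)"
    by (rule inner_horn_filler) auto
  then have "filler X n x a b (\<lambda>f. act X (Suc n) f z)"
    unfolding filler_def using p unfolding y_def by auto
  then show ?thesis using that by blast
qed

text \<open>The faces of an inner horn \<open>\<Lambda>\<^sup>n[n + 2]\<close> with three filler simplices at the faces
  \<open>n - 1\<close>, \<open>n + 1\<close>, \<open>n + 2\<close>; its missing face relates their composites.\<close>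

definition assoc_horn :: "'a \<Rightarrow> 'a \<Rightarrow> 'a \<Rightarrow> nat \<Rightarrow> 'a" where
  "assoc_horn Y1 Y2 Y3 i = (if i = n - 1 then Y1 else if i = Suc n then Y2 else if i = Suc (Suc n) then Y3
    else const X x (Suc n))"

lemma assoc_horn_simplex:
  assumes "filler_simplex Y1" "filler_simplex Y2" "filler_simplex Y3"
  shows "assoc_horn Y1 Y2 Y3 i \<in> cells X (Suc n)" "assoc_horn Y1 Y2 Y3 i \<in> thin X (Suc n)"
    and "l < n - 1 \<Longrightarrow> dface l (assoc_horn Y1 Y2 Y3 i) = const X x n"
proof -
  have "filler_simplex (assoc_horn Y1 Y2 Y3 i) \<or> assoc_horn Y1 Y2 Y3 i = const X x (Suc n)"
    unfolding assoc_horn_def using assms by auto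
  moreover assume "l < n - 1"
  then have "l \<le> Suc n" "l \<notin> {n - 1, n, Suc n}" by auto
  ultimately show "dface l (assoc_horn Y1 Y2 Y3 i) = const X x n"
    using const_face unfolding filler_simplex_def by auto
qed (use assms const_cells const_thin in \<open>auto simp: assoc_horn_def filler_simplex_def\<close>)

lemma stratified_horn_assoc_horn:
  assumes Y: "filler_simplex Y1" "filler_simplex Y2" "filler_simplex Y3"
    and c1: "dface (n - 1) Y2 = dface n Y1" and c2: "dface (n - 1) Y3 = dface (Suc n) Y1"
    and c3: "dface (Suc n) Y3 = dface (Suc n) Y2"
  shows "stratified_horn n n (assoc_horn Y1 Y2 Y3)"
proof (rule stratified_hornI)
  note y = assoc_horn_simplex[OF Y]
  show "dface i (assoc_horn Y1 Y2 Y3 i') = dface (i' - 1) (assoc_horn Y1 Y2 Y3 i)"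
    if "i < i'" "i' \<le> Suc (Suc n)" "i \<noteq> n" "i' \<noteq> n" for i i'
  proof (cases "i < n - 1")
    case True
    then show ?thesis using y(3)[OF True] const_face[of "i' - 1" n] that unfolding assoc_horn_def by auto
  next
    case False
    then have "i = n - 1 \<or> i = Suc n" "i' = Suc n \<or> i' = Suc (Suc n)" using that by auto
    then show ?thesis using that c1 c2 c3 n_Suc unfolding assoc_horn_def by auto
  qed
  show "act X (Suc n) g (assoc_horn Y1 Y2 Y3 i) \<in> thin X m"
    if i: "i \<le> Suc (Suc n)" "i \<noteq> n" and g: "mono_op m (Suc n) g"
      and cov: "{n - 1, n, Suc n} \<subseteq> set (map (\<lambda>j. face (Suc (Suc n)) i ! j) g)" for i m g
  proof -
    have "i \<noteq> n - 1" "i \<noteq> Suc n" using not_in_face_comp[OF g i(1)] cov by auto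
    then consider "i = Suc (Suc n)" "assoc_horn Y1 Y2 Y3 i = Y3" | "assoc_horn Y1 Y2 Y3 i = const X x (Suc n)"
      by (cases "i = Suc (Suc n)") (auto simp: assoc_horn_def)
    then show ?thesis
    proof cases
      case 1
      have "Suc n < i" "i \<le> Suc (Suc n)" using 1 by auto
      moreover have "Y3 \<in> cells X (Suc n)" "Y3 \<in> thin X (Suc n)"
        "\<And>l. l \<le> Suc n \<Longrightarrow> l \<notin> {n - 1, n, Suc n} \<Longrightarrow> dface l Y3 = const X x n"
        using Y(3) unfolding filler_simplex_def by auto
      ultimately show ?thesis using act_thin_if_covers_below_face[OF dim_pos _ _ _ _ _ g cov] 1(2) by simp
    qed (use act_const_thin_if_covers[OF dim_pos g cov] in simp)
  qed
qed (use assoc_horn_simplex[OF Y] in auto)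

lemma filler_simplex_horn:
  assumes Y: "filler_simplex Y1" "filler_simplex Y2" "filler_simplex Y3"
    and c: "dface (n - 1) Y2 = dface n Y1" "dface (n - 1) Y3 = dface (Suc n) Y1"
      "dface (Suc n) Y3 = dface (Suc n) Y2"
  obtains t where "filler_simplex t" "dface (n - 1) t = dface (n - 1) Y1"
    "dface n t = dface n Y2" "dface (Suc n) t = dface n Y3"
proof -
  note y = assoc_horn_simplex[OF Y]
  obtain t where t: "t \<in> cells X (Suc n)" "t \<in> thin X (Suc n)"
    and tf: "\<And>l. l \<le> Suc n \<Longrightarrow> dface l t = (if l < n then dface (n - 1) (assoc_horn Y1 Y2 Y3 l)
      else dface n (assoc_horn Y1 Y2 Y3 (Suc l)))"
    by (rule inner_horn_thin_composite[OF stratified_horn_assoc_horn[OF Y c] dim_pos]) (use y(2) in auto)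
  have "filler_simplex t"
    unfolding filler_simplex_def using t tf const_face[of "n - 1" n] unfolding assoc_horn_def by auto
  moreover have "dface (n - 1) t = dface (n - 1) Y1" "dface n t = dface n Y2" "dface (Suc n) t = dface n Y3"
    using tf dim_pos unfolding assoc_horn_def by auto
  ultimately show ?thesis using that by blast
qed

text \<open>Thin homotopies use only the direction \<open>j = n\<close>; the other directions arise when the prism
  \<open>\<Delta>[n] \<times> \<Delta>[1]\<close> is cut into simplices.\<close>

definition htpy_simplex :: "nat \<Rightarrow> 'a \<Rightarrow> 'a \<Rightarrow> 'a \<Rightarrow> bool" where
  "htpy_simplex j w u v \<longleftrightarrow> w \<in> cells X (Suc n) \<and> w \<in> thin X (Suc n) \<and>
     dface j w = u \<and> dface (Suc j) w = v \<and> (\<forall>i\<le>Suc n. i \<noteq> j \<and> i \<noteq> Suc j \<longrightarrow> dface i w = const X x n)"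

definition thin_htpy :: "'a \<Rightarrow> 'a \<Rightarrow> bool" where
  "thin_htpy u v \<longleftrightarrow> (\<exists>w. htpy_simplex n w u v)"

lemma htpy_simplex_face:
  "htpy_simplex j w u v \<Longrightarrow> i \<le> Suc n \<Longrightarrow> i \<noteq> j \<Longrightarrow> i \<noteq> Suc j \<Longrightarrow> dface i w = const X x n"
  unfolding htpy_simplex_def by blast

lemma filler_simplex_htpy_simplex: "htpy_simplex n w u v \<Longrightarrow> filler_simplex w"
  unfolding htpy_simplex_def filler_simplex_def by auto

lemma filler_simplex_sdegen: "a \<in> sph \<Longrightarrow> filler_simplex (sdegen (n - 1) a)"
  unfolding filler_simplex_def using sdegen_cells sdegen_thin sdegen_face[of a "n - 1"] n_Suc by auto

lemma htpy_simplex_refl: "a \<in> sph \<Longrightarrow> htpy_simplex n (sdegen n a) a a"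
  unfolding htpy_simplex_def using sdegen_cells sdegen_thin sdegen_face[of a n] by auto

lemma filler_unit_left:
  assumes b: "b \<in> sph"
  shows "filler X n x (const X x n) b (\<lambda>f. act X (Suc n) f (sdegen n b))"
    and "dface n (sdegen n b) = b"
proof -
  have "filler_simplex (sdegen n b)" using filler_simplex_htpy_simplex[OF htpy_simplex_refl[OF b]] .
  moreover have "dface (n - 1) (sdegen n b) = const X x n" "dface (Suc n) (sdegen n b) = b"
    using sdegen_face[OF b, of n] dim_pos by auto
  ultimately show "filler X n x (const X x n) b (\<lambda>f. act X (Suc n) f (sdegen n b))"
    using filler_of_simplex by metis
  show "dface n (sdegen n b) = b" using sdegen_face[OF b, of n n] by simp
qed

lemma filler_unit_right:
  assumes a: "a \<in> sph"
  shows "filler X n x a (const X x n) (\<lambda>f. act X (Suc n) f (sdegen (n - 1) a))"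
    and "dface n (sdegen (n - 1) a) = a"
proof -
  have "dface (n - 1) (sdegen (n - 1) a) = a" "dface n (sdegen (n - 1) a) = a"
    "dface (Suc n) (sdegen (n - 1) a) = const X x n"
    using sdegen_face[OF a, of "n - 1"] n_Suc by auto
  then show "filler X n x a (const X x n) (\<lambda>f. act X (Suc n) f (sdegen (n - 1) a))"
    "dface n (sdegen (n - 1) a) = a"
    using filler_of_simplex[OF filler_simplex_sdegen[OF a]] by auto
qed

lemma composite_thin_htpy_left:
  assumes w: "htpy_simplex n w a a'" and \<theta>: "filler X n x a b \<theta>" and \<theta>': "filler X n x a' b \<theta>'"
  shows "thin_htpy (composite \<theta>) (composite \<theta>')"
proof -
  note D = fillerD[OF \<theta>] and D' = fillerD[OF \<theta>']
  have w0: "dface (n - 1) w = const X x n" using htpy_simplex_face[OF w] dim_pos by simp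
  obtain t where t: "filler_simplex t" "dface (n - 1) t = dface (n - 1) w"
    "dface n t = dface n (\<theta> [0..<Suc (Suc n)])" "dface (Suc n) t = dface n (\<theta>' [0..<Suc (Suc n)])"
    by (rule filler_simplex_horn[OF filler_simplex_htpy_simplex[OF w] D(1) D'(1)])
      (use D(3) D'(3) D(4) D'(4) w in \<open>auto simp: htpy_simplex_def\<close>)
  then have "htpy_simplex n t (composite \<theta>) (composite \<theta>')"
    using D(5) D'(5) w0 unfolding htpy_simplex_def filler_simplex_def by auto
  then show ?thesis unfolding thin_htpy_def by blast
qed

lemma filler_thin_htpy_right:
  assumes a: "a \<in> sph" and w: "htpy_simplex n w b b'" and \<theta>': "filler X n x a b' \<theta>'"
  obtains \<theta> where "filler X n x a b \<theta>" "composite \<theta> = composite \<theta>'"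
proof -
  note D' = fillerD[OF \<theta>']
  have sf: "l \<le> Suc n \<Longrightarrow> dface l (sdegen (n - 1) a) = (if l = n - 1 \<or> l = n then a else const X x n)" for l
    using sdegen_face[OF a, of "n - 1" l] n_Suc by auto
  have w0: "dface (n - 1) w = const X x n" using htpy_simplex_face[OF w] dim_pos by simp
  obtain t where t: "filler_simplex t" "dface (n - 1) t = dface (n - 1) (sdegen (n - 1) a)"
    "dface n t = dface n (\<theta>' [0..<Suc (Suc n)])" "dface (Suc n) t = dface n w"
    by (rule filler_simplex_horn[OF filler_simplex_sdegen[OF a] D'(1) filler_simplex_htpy_simplex[OF w]])
      (use D'(3) D'(4) sf[of n] sf[of "Suc n"] w0 w in \<open>auto simp: htpy_simplex_def\<close>)
  moreover have "dface (n - 1) t = a" "dface (Suc n) t = b"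
    using t(2,4) sf[of "n - 1"] w unfolding htpy_simplex_def by auto
  ultimately show ?thesis using that filler_of_simplex[OF t(1)] D'(5) by auto
qed

lemma filler_assoc:
  assumes \<theta>1: "filler X n x a b \<theta>1" and \<theta>2: "filler X n x (composite \<theta>1) c \<theta>2"
    and \<theta>3: "filler X n x b c \<theta>3"
  obtains \<theta> where "filler X n x a (composite \<theta>3) \<theta>" "composite \<theta> = composite \<theta>2"
proof -
  note D1 = fillerD[OF \<theta>1] and D2 = fillerD[OF \<theta>2] and D3 = fillerD[OF \<theta>3]
  obtain t where t: "filler_simplex t" "dface (n - 1) t = dface (n - 1) (\<theta>1 [0..<Suc (Suc n)])"
    "dface n t = dface n (\<theta>2 [0..<Suc (Suc n)])" "dface (Suc n) t = dface n (\<theta>3 [0..<Suc (Suc n)])"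
    by (rule filler_simplex_horn[OF D1(1) D2(1) D3(1)]) (use D1 D2 D3 in simp_all)
  then show ?thesis using that filler_of_simplex[OF t(1)] D1(3) D2(5) D3(5) by auto
qed

text \<open>A thin homotopy \<open>w\<close> in direction \<open>j < n\<close> is moved to direction \<open>j + 1\<close> by filling the inner
  horn \<open>\<Lambda>\<^sup>j\<^sup>+\<^sup>1[n + 2]\<close> with faces \<open>sdegen (j + 1) u\<close>, \<open>sdegen j u\<close>, \<open>w\<close> at \<open>j\<close>, \<open>j + 2\<close>, \<open>j + 3\<close>.\<close>

definition shift_horn :: "nat \<Rightarrow> 'a \<Rightarrow> 'a \<Rightarrow> nat \<Rightarrow> 'a" where
  "shift_horn j u w i = (if i = j then sdegen (Suc j) u else if i = Suc (Suc j) then sdegen j u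
     else if i = Suc (Suc (Suc j)) then w else const X x (Suc n))"

lemma shift_horn_face:
  assumes j: "j < n" and u: "u \<in> sph" and w: "htpy_simplex j w u v" and l: "l \<le> Suc n"
  shows "dface l (shift_horn j u w i) =
    (if i = j then (if l = Suc j \<or> l = Suc (Suc j) then u else const X x n)
     else if i = Suc (Suc j) then (if l = j \<or> l = Suc j then u else const X x n)
     else if i = Suc (Suc (Suc j)) then (if l = j then u else if l = Suc j then v else const X x n)
     else const X x n)"
  using sdegen_face[OF u, of "Suc j" l] sdegen_face[OF u, of j l] const_face[OF l]
    htpy_simplex_face[OF w l] w j l unfolding shift_horn_def htpy_simplex_def by auto

lemma shift_horn_simplex:
  assumes j: "j < n" and u: "u \<in> sph" and w: "htpy_simplex j w u v"
  shows "shift_horn j u w i \<in> cells X (Suc n)" "shift_horn j u w i \<in> thin X (Suc n)"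
  using sdegen_cells[OF u] sdegen_thin[OF u] w const_cells const_thin j
  unfolding shift_horn_def htpy_simplex_def by auto

lemma stratified_horn_shift_horn:
  assumes j: "j < n" and u: "u \<in> sph" and w: "htpy_simplex j w u v"
  shows "stratified_horn (Suc j) n (shift_horn j u w)"
proof (rule stratified_hornI)
  note yf = shift_horn_face[OF j u w]
  show "dface i (shift_horn j u w i') = dface (i' - 1) (shift_horn j u w i)"
    if "i < i'" "i' \<le> Suc (Suc n)" "i \<noteq> Suc j" "i' \<noteq> Suc j" for i i'
    using yf[of i i'] yf[of "i' - 1" i] that by auto
  show "act X (Suc n) g (shift_horn j u w i) \<in> thin X m"
    if i: "i \<le> Suc (Suc n)" "i \<noteq> Suc j" and g: "mono_op m (Suc n) g"
      and cov: "{Suc j - 1, Suc j, Suc (Suc j)} \<subseteq> set (map (\<lambda>t. face (Suc (Suc n)) i ! t) g)" for i m g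
  proof (cases "i = Suc (Suc (Suc j))")
    case True
    then show ?thesis
      using act_thin_if_covers_below_face[of "Suc j" i n w, OF _ _ i(1) _ _ _ g cov]
        htpy_simplex_face[OF w] w unfolding shift_horn_def htpy_simplex_def by auto
  next
    case False
    moreover have "i \<noteq> j" "i \<noteq> Suc (Suc j)" using not_in_face_comp[OF g i(1)] cov by auto
    ultimately show ?thesis
      using act_const_thin_if_covers[of "Suc j" m n g] g cov unfolding shift_horn_def by simp
  qed
qed (use shift_horn_simplex[OF j u w] in auto)

lemma htpy_simplex_shift:
  assumes j: "j < n" and u: "u \<in> sph" and w: "htpy_simplex j w u v"
  obtains w' where "htpy_simplex (Suc j) w' u v"
proof -
  obtain t where t: "t \<in> cells X (Suc n)" "t \<in> thin X (Suc n)"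
    and tf: "\<And>l. l \<le> Suc n \<Longrightarrow> dface l t = (if l < Suc j then dface (Suc j - 1) (shift_horn j u w l)
      else dface (Suc j) (shift_horn j u w (Suc l)))"
    by (rule inner_horn_thin_composite[OF stratified_horn_shift_horn[OF j u w]])
      (use j shift_horn_simplex[OF j u w] in auto)
  then have "htpy_simplex (Suc j) t u v"
    unfolding htpy_simplex_def using shift_horn_face[OF j u w] j by auto
  then show ?thesis using that by blast
qed

lemma htpy_simplex_top:
  assumes "j \<le> n" "u \<in> sph" "htpy_simplex j w u v"
  shows "thin_htpy u v"
  using assms
proof (induction "n - j" arbitrary: j w)
  case 0
  then show ?case unfolding thin_htpy_def by auto
next
  case (Suc d)
  have "j < n" using Suc.hyps(2) by simp
  then obtain w' where "htpy_simplex (Suc j) w' u v" using htpy_simplex_shift Suc.prems(2,3) by blast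
  then show ?case using Suc.hyps(1)[of "Suc j" w'] Suc.hyps(2) Suc.prems(2) \<open>j < n\<close> by simp
qed

lemma htpy_simplex_act_last:
  assumes w: "htpy_simplex n w u v" and f: "mono_op m n f"
  shows "act X (Suc n) f w = act X n f v"
proof -
  have wc: "w \<in> cells X (Suc n)" and "dface (Suc n) w = v" using w unfolding htpy_simplex_def by auto
  moreover have "face_factor (Suc n) f = f"
    using f unfolding face_factor_def mono_op_def by (auto intro!: map_idI)
  moreover have "mono_op m (Suc n) f" "Suc n \<notin> set f" using f by (auto simp: mono_op_def)
  ultimately show ?thesis using act_face_factor[OF wc, of m f "Suc n"] by simp
qed

lemma htpy_simplex_act_prism_op:
  assumes w: "htpy_simplex n w u v" and f: "mono_op m n f" and e: "mono_op m 1 e"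
    and c: "in_last_prism n f e" and nn: "n \<notin> set (prism_op f e)"
  shows "act X (Suc n) (prism_op f e) w = act X n f u"
proof -
  have wc: "w \<in> cells X (Suc n)" and "dface n w = u" using w unfolding htpy_simplex_def by auto
  then show ?thesis
    using act_face_factor[OF wc mono_op_prism_op[OF f e], of n] nn face_factor_prism_op[OF f e c nn] by simp
qed

lemma htpy_simplex_act_const:
  assumes w: "htpy_simplex n w u v" and g: "mono_op m (Suc n) g" "j \<notin> set g" "j < n"
  shows "act X (Suc n) g w = const X x m"
proof -
  have "w \<in> cells X (Suc n)" using w unfolding htpy_simplex_def by simp
  then show ?thesis using act_const_if_face_const[OF _ g(1) _ g(2)] htpy_simplex_face[OF w, of j] g(3) by simp
qed

text \<open>The homotopy collapses the prism onto its last simplex, which is mapped by \<open>w\<close>.\<close>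

definition prism_htpy :: "'a \<Rightarrow> 'a \<Rightarrow> nat list \<times> nat list \<Rightarrow> 'a" where
  "prism_htpy w u = (\<lambda>(f, e). if in_last_prism n f e then act X (Suc n) (prism_op f e) w else act X n f u)"

lemma prism_htpy_act:
  assumes w: "htpy_simplex n w u v" and u: "u \<in> sph" and f: "mono_op m n f" and e: "mono_op m 1 e"
    and g: "mono_op k m g"
  shows "prism_htpy w u (map (\<lambda>j. f ! j) g, map (\<lambda>j. e ! j) g) = act X m g (prism_htpy w u (f, e))"
proof -
  have wc: "w \<in> cells X (Suc n)" using w unfolding htpy_simplex_def by simp
  have gl: "\<forall>j\<in>set g. j < length f" using g f by (auto simp: mono_op_def less_Suc_eq_le)
  have le: "length e = length f" using e f by (simp add: mono_op_def)
  have fg: "mono_op k n (map (\<lambda>j. f ! j) g)" "mono_op k 1 (map (\<lambda>j. e ! j) g)"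
    using mono_op_comp[OF g f] mono_op_comp[OF g e] by auto
  note u_comp = act_comp[OF sphere_cells[OF u] f g]
  consider "in_last_prism n f e"
    | "\<not> in_last_prism n f e" "in_last_prism n (map (\<lambda>j. f ! j) g) (map (\<lambda>j. e ! j) g)"
    | "\<not> in_last_prism n f e" "\<not> in_last_prism n (map (\<lambda>j. f ! j) g) (map (\<lambda>j. e ! j) g)"
    by blast
  then show ?thesis
  proof cases
    case 1
    then show ?thesis unfolding prism_htpy_def
      using in_last_prism_comp[OF 1 gl] prism_op_comp[OF gl le] act_comp[OF wc mono_op_prism_op[OF f e] g]
      by simp
  next
    case 2
    then show ?thesis unfolding prism_htpy_def
      using htpy_simplex_act_prism_op[OF w fg 2(2) prism_op_comp_not_in[OF f e 2(1) gl 2(2)]] u_comp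
      by simp
  qed (simp add: prism_htpy_def u_comp)
qed

lemma prism_htpy_thin:
  assumes w: "htpy_simplex n w u v" and u: "u \<in> sph" and f: "mono_op m n f" and e: "mono_op m 1 e"
    and nd: "\<not> distinct f"
  shows "prism_htpy w u (f, e) \<in> thin X m"
proof -
  have wc: "w \<in> cells X (Suc n)" "w \<in> thin X (Suc n)" using w unfolding htpy_simplex_def by auto
  have "act X (Suc n) (prism_op f e) w \<in> thin X m" if c: "in_last_prism n f e"
  proof (cases "distinct (prism_op f e)")
    case True
    have "length e = length f" using e f by (simp add: mono_op_def)
    then have "{n, Suc n} \<subseteq> set (prism_op f e)" using prism_op_covers_last[OF e c _ nd True] by simp
    then show ?thesis
      using act_thin_if_covers[OF wc, of "{n, Suc n}" m "prism_op f e"] htpy_simplex_face[OF w]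
        mono_op_prism_op[OF f e] by auto
  qed (use act_thin_if_not_distinct[OF wc(1) mono_op_prism_op[OF f e]] in simp)
  then show ?thesis unfolding prism_htpy_def
    using act_thin_if_not_distinct[OF sphere_cells[OF u] f nd] by simp
qed

lemma smap_prism_htpy:
  assumes w: "htpy_simplex n w u v" and u: "u \<in> sph"
  shows "smap (sprod (Delta n) (Delta_t 1)) X (prism_htpy w u)"
  unfolding smap_def
proof (intro conjI allI impI)
  fix m a assume "a \<in> cells (sprod (Delta n) (Delta_t 1)) m"
  moreover obtain f e where fe: "a = (f, e)" by (cases a)
  ultimately have f: "mono_op m n f" and e: "mono_op m 1 e" by (auto simp: sprod_Delta_cells)
  have "w \<in> cells X (Suc n)" using w unfolding htpy_simplex_def by simp
  then show "prism_htpy w u a \<in> cells X m" unfolding prism_htpy_def fe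
    using act_cells[OF _ mono_op_prism_op[OF f e]] act_cells[OF sphere_cells[OF u] f] by simp
next
  fix m k g a assume "a \<in> cells (sprod (Delta n) (Delta_t 1)) m" and g: "mono_op k m g"
  moreover obtain f e where fe: "a = (f, e)" by (cases a)
  ultimately show "prism_htpy w u (act (sprod (Delta n) (Delta_t 1)) m g a) = act X m g (prism_htpy w u a)"
    using prism_htpy_act[OF w u _ _ g] by (simp add: sprod_Delta_cells sprod_Delta_act)
next
  fix m a assume a: "a \<in> thin (sprod (Delta n) (Delta_t 1)) m"
  obtain f e where fe: "a = (f, e)" by (cases a)
  have "mono_op m n f" "mono_op m 1 e" "degen (Dcells n) Dact m f" using a fe
    by (auto simp: sprod_def Delta_def Delta_t_def Delta_with_def Dcells_def)
  then show "prism_htpy w u a \<in> thin X m"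
    unfolding fe using prism_htpy_thin[OF w u] degen_not_distinct by blast
qed

lemma prism_htpy_bottom:
  assumes w: "htpy_simplex n w u v" and f: "mono_op m n f"
  shows "prism_htpy w u (f, replicate (Suc m) 0) = act X n f v"
proof -
  have "length f = Suc m" using f by (simp add: mono_op_def)
  then have "in_last_prism n f (replicate (Suc m) 0)" "prism_op f (replicate (Suc m) 0) = f"
    by (auto simp: in_last_prism_def nth_prism_op intro: nth_equalityI simp del: replicate_Suc)
  then show ?thesis unfolding prism_htpy_def using htpy_simplex_act_last[OF w f] by simp
qed

lemma prism_htpy_top:
  assumes w: "htpy_simplex n w u v" and u: "u \<in> sph" and f: "mono_op m n f"
  shows "prism_htpy w u (f, replicate (Suc m) 1) = act X n f u"
proof (cases "in_last_prism n f (replicate (Suc m) 1)")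
  case True
  have fl: "length f = Suc m" using f by (simp add: mono_op_def)
  then have fn: "\<forall>t<length f. f ! t = n" using True unfolding in_last_prism_def by (simp del: replicate_Suc)
  have e1: "mono_op m 1 (replicate (Suc m) 1)" by (simp add: mono_op_def)
  have "0 \<notin> set (prism_op f (replicate (Suc m) 1))"
    using fn fl by (auto simp: in_set_conv_nth nth_prism_op simp del: replicate_Suc)
  then have "act X (Suc n) (prism_op f (replicate (Suc m) 1)) w = const X x m"
    using htpy_simplex_act_const[OF w mono_op_prism_op[OF f e1]] dim_pos by simp
  moreover have "0 \<notin> set f" using fn dim_pos by (auto simp: in_set_conv_nth)
  then have "set f \<noteq> {0..n}" by auto
  ultimately show ?thesis unfolding prism_htpy_def using True sphere_act[OF u f] by simp
qed (simp add: prism_htpy_def)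

lemma prism_htpy_boundary:
  assumes w: "htpy_simplex n w u v" and u: "u \<in> sph" and v: "v \<in> sph"
    and f: "mono_op m n f" "set f \<noteq> {0..n}" and e: "mono_op m 1 e"
  shows "prism_htpy w u (f, e) = act X n f v"
proof -
  have fl: "length f = Suc m" "\<forall>i\<in>set f. i \<le> n" and el: "length e = Suc m"
    using f e by (auto simp: mono_op_def)
  have cv: "act X n f v = const X x m" using sphere_act[OF v f] .
  obtain i0 where i0: "i0 \<le> n" "i0 \<notin> set f" using mono_op_not_surj[OF f] .
  have "act X (Suc n) (prism_op f e) w = act X n f v" if c: "in_last_prism n f e"
  proof (cases "i0 < n")
    case True
    have "i0 \<notin> set (prism_op f e)"
    proof
      assume "i0 \<in> set (prism_op f e)"
      then obtain t where t: "t < length f" "f ! t + e ! t = i0" by (auto simp: in_set_conv_nth nth_prism_op)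
      moreover have "e ! t = 0 \<or> e ! t = 1" using mono_op_one_nth[OF e] t fl el by simp
      ultimately show False using i0 nth_mem[OF t(1)] c True unfolding in_last_prism_def by force
    qed
    then show ?thesis using htpy_simplex_act_const[OF w mono_op_prism_op[OF f(1) e] _ True] cv by simp
  next
    case False
    then have "i0 = n" using i0 by simp
    have "e ! t = 0" if t: "t < length f" for t
      using mono_op_one_nth[OF e, of t] c t fl el i0 \<open>i0 = n\<close> nth_mem[OF t]
      unfolding in_last_prism_def by force
    then have "prism_op f e = f" by (intro nth_equalityI) (simp_all add: nth_prism_op)
    then show ?thesis using htpy_simplex_act_last[OF w f(1)] by simp
  qed
  then show ?thesis unfolding prism_htpy_def using sphere_act[OF u f] cv by simp
qed

lemma htpy_of_htpy_simplex:
  assumes w: "htpy_simplex n w u v" and u: "u \<in> sph" and v: "v \<in> sph"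
  shows "htpy X n v u"
  unfolding htpy_def
proof (intro exI[of _ "prism_htpy w u"] conjI allI impI)
  show "smap (sprod (Delta n) (Delta_t 1)) X (prism_htpy w u)" by (rule smap_prism_htpy[OF w u])
  show "prism_htpy w u (f, replicate (Suc m) 0) = act X n f v" if "f \<in> Dcells n m" for m f
    using prism_htpy_bottom[OF w] that by (simp add: Dcells_def)
  show "prism_htpy w u (f, replicate (Suc m) 1) = act X n f u" if "f \<in> Dcells n m" for m f
    using prism_htpy_top[OF w u] that by (simp add: Dcells_def)
  show "prism_htpy w u (f, e) = act X n f v"
    if "f \<in> Dcells n m" "set f \<noteq> {0..n}" "e \<in> Dcells 1 m" for m f e
    using prism_htpy_boundary[OF w u v] that by (simp add: Dcells_def)
qed

definition thin_htpy_step :: "'a \<Rightarrow> 'a \<Rightarrow> bool" where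
  "thin_htpy_step u v \<longleftrightarrow> u \<in> sph \<and> v \<in> sph \<and> (thin_htpy u v \<or> thin_htpy v u)"

text \<open>The restriction of a homotopy \<open>H\<close> to the \<open>j\<close>-th simplex of the prism is a thin homotopy
  in direction \<open>j\<close> between two consecutive levels \<open>H (id, cut_op n j)\<close>.\<close>

lemma htpy_level_in_sphere:
  assumes H: "smap (sprod (Delta n) (Delta_t 1)) X H"
    and bd: "\<And>m f e. f \<in> Dcells n m \<Longrightarrow> set f \<noteq> {0..n} \<Longrightarrow> e \<in> Dcells 1 m \<Longrightarrow> H (f, e) = act X n f a"
    and a: "a \<in> sph" and j: "j \<le> Suc n"
  shows "H ([0..<Suc n], cut_op n j) \<in> sph"
proof (rule sphereI)
  have id: "mono_op n n [0..<Suc n]" by (rule mono_op_id)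
  show "H ([0..<Suc n], cut_op n j) \<in> cells X n"
    using H id mono_op_cut_op[OF j] unfolding smap_def by (simp add: sprod_Delta_cells)
  fix l assume l: "l \<le> n"
  have "map (\<lambda>t. [0..<Suc n] ! t) (face n l) = face n l"
    using set_face[OF l] map_nth_upt[of "face n l" n] by simp
  then show "act X n (face n l) (H ([0..<Suc n], cut_op n j)) = const X x (n - 1)"
    using smap_sprod_Delta_act[OF H id mono_op_cut_op[OF j] mono_op_face_n[OF l]]
      bd[of "face n l" "n - 1"] face_not_surj[OF l] mono_op_face_n[OF l]
      mono_op_comp[OF mono_op_face_n[OF l] mono_op_cut_op[OF j]] sphere_face[OF a l] by (simp add: Dcells_def)
qed

lemma htpy_slice:
  assumes H: "smap (sprod (Delta n) (Delta_t 1)) X H"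
    and bd: "\<And>m f e. f \<in> Dcells n m \<Longrightarrow> set f \<noteq> {0..n} \<Longrightarrow> e \<in> Dcells 1 m \<Longrightarrow> H (f, e) = act X n f a"
    and a: "a \<in> sph" and j: "j \<le> n"
  shows "htpy_simplex j (H (codegen n j, cut_op (Suc n) (Suc j)))
           (H ([0..<Suc n], cut_op n j)) (H ([0..<Suc n], cut_op n (Suc j)))"
proof -
  define w where "w = H (codegen n j, cut_op (Suc n) (Suc j))"
  have f: "mono_op (Suc n) n (codegen n j)" and e: "mono_op (Suc n) 1 (cut_op (Suc n) (Suc j))"
    using mono_op_codegen[OF j] mono_op_cut_op j by auto
  have "w \<in> cells X (Suc n)" using H f e unfolding smap_def w_def by (simp add: sprod_Delta_cells)
  moreover have "w \<in> thin X (Suc n)"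
    using H f e mono_op_degen[OF f] mono_op_degen[OF e] dim_pos unfolding smap_def w_def
    by (auto simp: sprod_def Delta_def Delta_t_def Delta_with_def Dcells_def)
  moreover have wf: "dface l w = H (map (\<lambda>t. codegen n j ! t) (face (Suc n) l),
      cut_op n (if l \<le> j then j else Suc j))" if l: "l \<le> Suc n" for l
    using smap_sprod_Delta_act[OF H f e mono_op_face[OF l]] cut_op_comp_face[OF j l] unfolding w_def by simp
  moreover have "dface l w = const X x n" if l: "l \<le> Suc n" "l \<noteq> j" "l \<noteq> Suc j" for l
    using wf[OF l(1)] bd sphere_act[OF a] codegen_comp_face_not_surj[OF j l]
      mono_op_comp[OF mono_op_face[OF l(1)] f] mono_op_cut_op[of _ n] j
    by (auto simp: Dcells_def)
  moreover have "dface j w = H ([0..<Suc n], cut_op n j)" "dface (Suc j) w = H ([0..<Suc n], cut_op n (Suc j))"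
    using wf[of j] wf[of "Suc j"] codegen_comp_face_id[OF j] j by (simp_all del: upt_Suc)
  ultimately show ?thesis unfolding htpy_simplex_def w_def by blast
qed

lemma htpy_thin_htpy_chain:
  assumes h: "htpy X n a b" and a: "a \<in> sph" and b: "b \<in> sph"
  shows "thin_htpy_step\<^sup>*\<^sup>* b a"
proof -
  obtain H where H: "smap (sprod (Delta n) (Delta_t 1)) X H"
    and H0: "\<And>m f. f \<in> Dcells n m \<Longrightarrow> H (f, replicate (Suc m) 0) = act X n f a"
    and H1: "\<And>m f. f \<in> Dcells n m \<Longrightarrow> H (f, replicate (Suc m) 1) = act X n f b"
    and bd: "\<And>m f e. f \<in> Dcells n m \<Longrightarrow> set f \<noteq> {0..n} \<Longrightarrow> e \<in> Dcells 1 m \<Longrightarrow> H (f, e) = act X n f a"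
    using h unfolding htpy_def by blast
  define level where "level j = H ([0..<Suc n], cut_op n j)" for j
  have "thin_htpy_step\<^sup>*\<^sup>* (level 0) (level j)" if "j \<le> Suc n" for j
    using that
  proof (induction j)
    case (Suc j)
    then have "thin_htpy (level j) (level (Suc j))"
      using htpy_simplex_top[OF _ _ htpy_slice[OF H bd a]] htpy_level_in_sphere[OF H bd a] unfolding level_def
      by auto
    then show ?case
      using Suc htpy_level_in_sphere[OF H bd a] unfolding thin_htpy_step_def level_def
      by (auto intro: rtranclp.rtrancl_into_rtrancl)
  qed simp
  moreover have "level 0 = b" "level (Suc n) = a"
    using H0 H1 act_id[OF sphere_cells[OF a]] act_id[OF sphere_cells[OF b]]
    by (auto simp: level_def cut_op_def Dcells_def mono_op_id simp del: upt_Suc replicate_Suc)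
  ultimately show ?thesis by auto
qed

lemma equiv_hrel: "equiv sph (hrel X n x)"
proof -
  define R where "R u v \<longleftrightarrow> u \<in> sph \<and> v \<in> sph \<and> (htpy X n u v \<or> htpy X n v u)" for u v
  have hrel: "hrel X n x = {(a, b). a \<in> sph \<and> b \<in> sph \<and> R\<^sup>*\<^sup>* a b}"
    unfolding hrel_def R_def by simp
  have "equivp R\<^sup>*\<^sup>*" by (rule equivp_rtranclp) (auto simp: R_def intro: sympI)
  then show ?thesis unfolding hrel
    by (intro equivI refl_onI symI transI) (auto dest: equivp_symp equivp_transp)
qed

lemma hclass_eq_iff: "a \<in> sph \<Longrightarrow> b \<in> sph \<Longrightarrow> hclass X n x a = hclass X n x b \<longleftrightarrow> (a, b) \<in> hrel X n x"
  unfolding hclass_def by (rule eq_equiv_class_iff[OF equiv_hrel])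

lemma hrel_sym: "(a, b) \<in> hrel X n x \<Longrightarrow> (b, a) \<in> hrel X n x"
  using equiv_hrel unfolding equiv_def by (meson symD)

lemma hrel_trans: "(a, b) \<in> hrel X n x \<Longrightarrow> (b, c) \<in> hrel X n x \<Longrightarrow> (a, c) \<in> hrel X n x"
  using equiv_hrel unfolding equiv_def by (meson transD)

lemma thin_htpy_hrel:
  assumes "u \<in> sph" "v \<in> sph" "thin_htpy u v"
  shows "(u, v) \<in> hrel X n x"
  using assms htpy_of_htpy_simplex unfolding thin_htpy_def hrel_def by blast

text \<open>Since homotopies decompose into thin homotopies, a relation between the sets \<open>F u\<close>
  needs to be checked only along thin homotopies.\<close>

lemma hrel_transfer:
  assumes "(a, a') \<in> hrel X n x"
    and nonempty: "\<And>u. u \<in> sph \<Longrightarrow> F u \<noteq> {}"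
    and refl: "\<And>u c c'. u \<in> sph \<Longrightarrow> c \<in> F u \<Longrightarrow> c' \<in> F u \<Longrightarrow> (c, c') \<in> hrel X n x"
    and step: "\<And>u v c c'. u \<in> sph \<Longrightarrow> v \<in> sph \<Longrightarrow> thin_htpy u v \<Longrightarrow> c \<in> F u \<Longrightarrow> c' \<in> F v \<Longrightarrow>
      (c, c') \<in> hrel X n x"
    and c: "c \<in> F a" "c' \<in> F a'"
  shows "(c, c') \<in> hrel X n x"
proof -
  define P where "P u v \<longleftrightarrow> u \<in> sph \<and> v \<in> sph \<and> (\<forall>c\<in>F u. \<forall>c'\<in>F v. (c, c') \<in> hrel X n x)" for u v
  have sym: "P v u" if "P u v" for u v using that hrel_sym unfolding P_def by blast
  have trans: "P u w" if "P u v" "P v w" for u v w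
    using that nonempty[of v] hrel_trans unfolding P_def by blast
  have thin: "P u v" if "thin_htpy_step u v" for u v
    using that step sym unfolding thin_htpy_step_def P_def by blast
  have chain: "P u v" if "thin_htpy_step\<^sup>*\<^sup>* u v" "u \<in> sph" for u v
    using that
  proof (induction rule: rtranclp_induct)
    case (step y z)
    then show ?case using thin trans by blast
  qed (use refl in \<open>auto simp: P_def\<close>)
  have "(\<lambda>u v. u \<in> sph \<and> v \<in> sph \<and> (htpy X n u v \<or> htpy X n v u))\<^sup>*\<^sup>* a a'" "a \<in> sph"
    using assms(1) unfolding hrel_def by auto
  then have "P a a'"
  proof (induction rule: rtranclp_induct)
    case (step v w)
    then have "P v w" using htpy_thin_htpy_chain chain sym by blast
    then show ?case using step trans by blast
  qed (auto simp: P_def refl)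
  then show ?thesis using c unfolding P_def by blast
qed

lemma composite_hrel:
  assumes a: "a \<in> sph" and b: "b \<in> sph" and \<theta>: "filler X n x a b \<theta>" and \<theta>': "filler X n x a b \<theta>'"
  shows "(composite \<theta>, composite \<theta>') \<in> hrel X n x"
  using thin_htpy_hrel composite_thin_htpy_left[OF htpy_simplex_refl[OF a] \<theta> \<theta>']
    composite_in_sphere[OF \<theta> a b] composite_in_sphere[OF \<theta>' a b] by blast

lemma composite_hrel_left:
  assumes "(a, a') \<in> hrel X n x" and b: "b \<in> sph"
    and "filler X n x a b \<theta>" "filler X n x a' b \<theta>'"
  shows "(composite \<theta>, composite \<theta>') \<in> hrel X n x"
proof (rule hrel_transfer[where F = "\<lambda>u. {composite \<theta> |\<theta>. filler X n x u b \<theta>}"])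
  show "{composite \<theta> |\<theta>. filler X n x u b \<theta>} \<noteq> {}" if "u \<in> sph" for u
    using filler_exists[OF that b] by blast
  show "(c, c') \<in> hrel X n x"
    if "u \<in> sph" "v \<in> sph" "thin_htpy u v" "c \<in> {composite \<theta> |\<theta>. filler X n x u b \<theta>}"
      "c' \<in> {composite \<theta> |\<theta>. filler X n x v b \<theta>}" for u v c c'
    using that thin_htpy_hrel composite_thin_htpy_left composite_in_sphere[OF _ _ b]
    unfolding thin_htpy_def by blast
qed (use assms composite_hrel[OF _ b] in auto)

lemma composite_hrel_right:
  assumes "(b, b') \<in> hrel X n x" and a: "a \<in> sph"
    and "filler X n x a b \<theta>" "filler X n x a b' \<theta>'"
  shows "(composite \<theta>, composite \<theta>') \<in> hrel X n x"
proof (rule hrel_transfer[where F = "\<lambda>u. {composite \<theta> |\<theta>. filler X n x a u \<theta>}"])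
  show "{composite \<theta> |\<theta>. filler X n x a u \<theta>} \<noteq> {}" if "u \<in> sph" for u
    using filler_exists[OF a that] by blast
  show "(c, c') \<in> hrel X n x"
    if u: "u \<in> sph" "v \<in> sph" "thin_htpy u v" and cc: "c \<in> {composite \<theta> |\<theta>. filler X n x a u \<theta>}"
      "c' \<in> {composite \<theta> |\<theta>. filler X n x a v \<theta>}" for u v c c'
  proof -
    obtain w \<theta> \<theta>' where "htpy_simplex n w u v" "filler X n x a u \<theta>" "filler X n x a v \<theta>'"
      "c = composite \<theta>" "c' = composite \<theta>'"
      using u cc unfolding thin_htpy_def by blast
    then show ?thesis using filler_thin_htpy_right[OF a] composite_hrel[OF a \<open>u \<in> sph\<close>] by metis
  qed
qed (use assms composite_hrel[OF a] in auto)

lemma composite_hclass_eq: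
  assumes "a \<in> sph" "b \<in> sph" "a' \<in> sph" "b' \<in> sph"
    and \<theta>: "filler X n x a b \<theta>" and \<theta>': "filler X n x a' b' \<theta>'"
    and "hclass X n x a = hclass X n x a'" "hclass X n x b = hclass X n x b'"
  shows "hclass X n x (composite \<theta>) = hclass X n x (composite \<theta>')"
proof -
  obtain \<theta>'' where \<theta>'': "filler X n x a' b \<theta>''" using filler_exists[OF assms(3,2)] .
  have "(composite \<theta>, composite \<theta>'') \<in> hrel X n x"
    using composite_hrel_left[OF _ assms(2) \<theta> \<theta>''] assms hclass_eq_iff by blast
  moreover have "(composite \<theta>'', composite \<theta>') \<in> hrel X n x"
    using composite_hrel_right[OF _ assms(3) \<theta>'' \<theta>'] assms hclass_eq_iff by blast
  ultimately show ?thesis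
    using hrel_trans hclass_eq_iff composite_in_sphere[OF \<theta>] composite_in_sphere[OF \<theta>'] assms by metis
qed

lemma hclass_in_tau: "a \<in> sph \<Longrightarrow> hclass X n x a \<in> tau X n x"
  unfolding tau_def hclass_def by (rule quotientI)

lemma tau_elim:
  assumes "A \<in> tau X n x"
  obtains a where "a \<in> sph" "A = hclass X n x a"
  using assms unfolding tau_def hclass_def by (auto elim!: quotientE)

lemma tau_mult_hclass:
  assumes a: "a \<in> sph" and b: "b \<in> sph" and \<theta>: "filler X n x a b \<theta>"
  shows "tau_mult X n x (hclass X n x a) (hclass X n x b) = hclass X n x (composite \<theta>)"
  unfolding tau_mult_def
proof (rule the_equality)
  have "(a, a) \<in> hrel X n x" "(b, b) \<in> hrel X n x"
    using a b equiv_hrel by (auto simp: equiv_def refl_on_def)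
  then show "\<exists>a'\<in>hclass X n x a. \<exists>b'\<in>hclass X n x b. \<exists>\<theta>'. filler X n x a' b' \<theta>' \<and>
      hclass X n x (composite \<theta>) = hclass X n x (composite \<theta>')"
    using \<theta> unfolding hclass_def by blast
next
  fix C assume "\<exists>a'\<in>hclass X n x a. \<exists>b'\<in>hclass X n x b. \<exists>\<theta>'. filler X n x a' b' \<theta>' \<and>
      C = hclass X n x (composite \<theta>')"
  then obtain a' b' \<theta>' where a': "(a, a') \<in> hrel X n x" and b': "(b, b') \<in> hrel X n x"
    and \<theta>': "filler X n x a' b' \<theta>'" and C: "C = hclass X n x (composite \<theta>')"
    unfolding hclass_def by blast
  have "a' \<in> sph" "b' \<in> sph" using a' b' equiv_hrel by (auto simp: equiv_def refl_on_def)
  then show "C = hclass X n x (composite \<theta>)"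
    using composite_hclass_eq[OF a b _ _ \<theta> \<theta>'] a' b' hclass_eq_iff a b C by metis
qed

lemma monoid_tau_monoid: "monoid (tau_monoid X n x)"
proof (rule monoidI, unfold tau_monoid_def monoid.select_convs partial_object.select_convs)
  fix A B assume "A \<in> tau X n x" "B \<in> tau X n x"
  then obtain a b where ab: "a \<in> sph" "b \<in> sph" "A = hclass X n x a" "B = hclass X n x b"
    by (meson tau_elim)
  obtain \<theta> where "filler X n x a b \<theta>" using filler_exists[OF ab(1,2)] .
  then show "tau_mult X n x A B \<in> tau X n x"
    using tau_mult_hclass hclass_in_tau composite_in_sphere ab by simp
next
  show "hclass X n x (const X x n) \<in> tau X n x" by (rule hclass_in_tau[OF const_in_sphere])
next
  fix A B C assume "A \<in> tau X n x" "B \<in> tau X n x" "C \<in> tau X n x"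
  then obtain a b c where abc: "a \<in> sph" "b \<in> sph" "c \<in> sph"
    and eq: "A = hclass X n x a" "B = hclass X n x b" "C = hclass X n x c"
    by (meson tau_elim)
  obtain \<theta>1 where \<theta>1: "filler X n x a b \<theta>1" using filler_exists abc by blast
  have ab: "composite \<theta>1 \<in> sph" using composite_in_sphere[OF \<theta>1] abc by simp
  obtain \<theta>2 where \<theta>2: "filler X n x (composite \<theta>1) c \<theta>2" using filler_exists ab abc by blast
  obtain \<theta>3 where \<theta>3: "filler X n x b c \<theta>3" using filler_exists abc by blast
  have bc: "composite \<theta>3 \<in> sph" using composite_in_sphere[OF \<theta>3] abc by simp
  obtain \<theta> where \<theta>: "filler X n x a (composite \<theta>3) \<theta>" "composite \<theta> = composite \<theta>2"
    using filler_assoc[OF \<theta>1 \<theta>2 \<theta>3] .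
  show "tau_mult X n x (tau_mult X n x A B) C = tau_mult X n x A (tau_mult X n x B C)"
    using tau_mult_hclass[OF abc(1,2) \<theta>1] tau_mult_hclass[OF ab abc(3) \<theta>2]
      tau_mult_hclass[OF abc(2,3) \<theta>3] tau_mult_hclass[OF abc(1) bc \<theta>(1)] \<theta>(2) eq by simp
next
  fix A assume "A \<in> tau X n x"
  then obtain a where a: "a \<in> sph" "A = hclass X n x a" by (meson tau_elim)
  show "tau_mult X n x (hclass X n x (const X x n)) A = A"
    using tau_mult_hclass[OF const_in_sphere a(1) filler_unit_left(1)[OF a(1)]] filler_unit_left(2)[OF a(1)] a(2)
    by simp
  show "tau_mult X n x A (hclass X n x (const X x n)) = A"
    using tau_mult_hclass[OF a(1) const_in_sphere filler_unit_right(1)[OF a(1)]] filler_unit_right(2)[OF a(1)] a(2)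
    by simp
qed

end

theorem mainTheorem4:
  fixes X :: "'a sset" and x :: 'a and n :: nat
  assumes "weak_complicial X" and "x \<in> cells X 0" and "1 \<le> n"
  shows "(\<forall>a\<in>sphere X n x. \<forall>b\<in>sphere X n x. \<exists>\<theta>. filler X n x a b \<theta>) \<and>
         (\<forall>a b \<theta> a' b' \<theta>'. a \<in> sphere X n x \<longrightarrow> b \<in> sphere X n x \<longrightarrow>
            a' \<in> sphere X n x \<longrightarrow> b' \<in> sphere X n x \<longrightarrow>
            filler X n x a b \<theta> \<longrightarrow> filler X n x a' b' \<theta>' \<longrightarrow>
            hclass X n x a = hclass X n x a' \<longrightarrow> hclass X n x b = hclass X n x b' \<longrightarrow>
            hclass X n x (\<theta> (face (Suc n) n)) = hclass X n x (\<theta>' (face (Suc n) n))) \<and>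
         monoid (tau_monoid X n x)"
proof -
  interpret homotopy_monoid X x n
    using assms by unfold_locales (simp_all add: weak_complicial_def)
  show ?thesis
    using filler_exists composite_hclass_eq monoid_tau_monoid by metis
qed

end
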